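(* Let $f:U\to H^3$ and $g:U\to S^3_1$ be the dual flat fronts described below. Let $p\in\Sigma(f)=\Sigma(g)$ be a cuspidal edge of $f$ (resp. $g$) and $\gamma$ a singular curve through $p=\gamma(0)$. Then $\gamma$ is a line of curvature of $f$ (resp. $g$) if and only if $\kappa_t^h$ (resp. $\kappa_t^d$) vanishes identically on $\gamma$.
   Context: Let $U\subset\boldsymbol{C}$ be a domain, $\alpha,\beta:U\to\boldsymbol{C}\setminus\{0\}$ holomorphic, $A:U\to SL(2,\boldsymbol{C})$ a solution of $A'=AD$ with $D=\begin{pmatrix}0&\alpha\\ \beta&0\end{pmatrix}$, and, identifying Lorentz–Minkowski 4-space with $2\times2$ Hermitian matrices, $f=AA^*:U\to H^3$ (hyperbolic 3-space) and $g=Ae_3A^*:U\to S^3_1$ (de Sitter 3-space), $e_3=\mathrm{diag}(1,-1)$. These are flat fronts, each the unit normal of the other, with $\Sigma(f)=\Sigma(g)=\{\alpha\overline{\alpha}-\beta\overline{\beta}=0\}$. $\kappa_t^h$ and $\kappa_t^d$ denote the cuspidal torsions of $f$ and $g$ along the singular curve. A curve $\gamma$ in $U$ is a line of curvature of a frontal $k$ if the first fundamental form applied to $(k\circ\gamma)'$ is parallel to the second fundamental form applied to $(k\circ\gamma)'$. *)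

theory Defs
  imports "HOL-Analysis.Analysis"
begin

fun dd :: "'a list \<Rightarrow> ('a::real_normed_vector \<Rightarrow> 'b::real_normed_vector) \<Rightarrow> 'a \<Rightarrow> 'b" where
  "dd [] f = f"
| "dd (v # vs) f = (\<lambda>x. frechet_derivative (dd vs f) (at x) v)"

definition cinf_on :: "'a set \<Rightarrow> ('a::real_normed_vector \<Rightarrow> 'b::real_normed_vector) \<Rightarrow> bool" where
  "cinf_on S f \<longleftrightarrow> open S \<and> (\<forall>vs. \<forall>x\<in>S. dd vs f differentiable (at x))"

definition local_diffeo :: "'a set \<Rightarrow> ('a::real_normed_vector \<Rightarrow> 'a) \<Rightarrow> bool" where
  "local_diffeo V \<phi> \<longleftrightarrow> open V \<and> open (\<phi> ` V) \<and> inj_on \<phi> V \<and> cinf_on V \<phi>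
      \<and> cinf_on (\<phi> ` V) (inv_into V \<phi>)"

definition herm_adj :: "complex^2^2 \<Rightarrow> complex^2^2" where
  "herm_adj X = (\<chi> i j. cnj (X $ j $ i))"

definition e3 :: "complex^2^2" where
  "e3 = (\<chi> i j. if i = j then (if i = 1 then 1 else -1) else 0)"

definition Dmat :: "complex \<Rightarrow> complex \<Rightarrow> complex^2^2" where
  "Dmat a b = (\<chi> i j. if i = 1 \<and> j = 2 then a else if i = 2 \<and> j = 1 then b else 0)"

text \<open>Coordinates of a Hermitian matrix
  X = [[x0+x3, x1+i x2],[x1-i x2, x0-x3]] as a point (x0,x1,x2,x3) of L^4.\<close>
definition herm4 :: "complex^2^2 \<Rightarrow> real^4" where
  "herm4 X = vector [Re (X$1$1 + X$2$2) / 2, Re (X$1$2), Im (X$1$2), Re (X$1$1 - X$2$2) / 2]"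

text \<open>Lorentz inner product of signature (-,+,+,+); lor (herm4 X) (herm4 X) = - det X.\<close>
definition lor :: "real^4 \<Rightarrow> real^4 \<Rightarrow> real" where
  "lor x y = - x$1 * y$1 + x$2 * y$2 + x$3 * y$3 + x$4 * y$4"

definition det4 :: "real^4 \<Rightarrow> real^4 \<Rightarrow> real^4 \<Rightarrow> real^4 \<Rightarrow> real" where
  "det4 a b c d = det (vector [a, b, c, d] :: real^4^4)"

definition hyp_front :: "(complex \<Rightarrow> complex^2^2) \<Rightarrow> complex \<Rightarrow> real^4" where
  "hyp_front A z = herm4 (A z ** herm_adj (A z))"

definition ds_front :: "(complex \<Rightarrow> complex^2^2) \<Rightarrow> complex \<Rightarrow> real^4" where
  "ds_front A z = herm4 (A z ** e3 ** herm_adj (A z))"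

definition sing_set :: "complex set \<Rightarrow> (complex \<Rightarrow> real^4) \<Rightarrow> complex set" where
  "sing_set U F = {z\<in>U. \<not> inj (frechet_derivative F (at z))}"

text \<open>p is a cuspidal edge of F: the germ of F at p is A-equivalent to the germ at 0 of
  (u,v) \<mapsto> (u, v^2, v^3) (inside R^4, last coordinate 0).  Source R^2 is C.\<close>
definition cusp_edge :: "complex set \<Rightarrow> (complex \<Rightarrow> real^4) \<Rightarrow> complex \<Rightarrow> bool" where
  "cusp_edge U F p \<longleftrightarrow> p \<in> U \<and> (\<exists>V \<phi> W \<Phi>. 0 \<in> V \<and> local_diffeo V \<phi> \<and> \<phi> 0 = p \<and> \<phi> ` V \<subseteq> U
      \<and> F p \<in> W \<and> local_diffeo W \<Phi> \<and> F ` (\<phi> ` V) \<subseteq> W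
      \<and> (\<forall>x\<in>V. \<Phi> (F (\<phi> x)) = vector [Re x, (Im x)^2, (Im x)^3, 0]))"

definition sing_curve :: "complex set \<Rightarrow> (complex \<Rightarrow> real^4) \<Rightarrow> (real \<Rightarrow> complex) \<Rightarrow> real \<Rightarrow> complex \<Rightarrow> bool" where
  "sing_curve U F \<gamma> \<epsilon> p \<longleftrightarrow> \<epsilon> > 0 \<and> cinf_on {-\<epsilon><..<\<epsilon>} \<gamma> \<and> \<gamma> 0 = p
     \<and> (\<forall>t\<in>{-\<epsilon><..<\<epsilon>}. vector_derivative \<gamma> (at t) \<noteq> 0 \<and> \<gamma> t \<in> sing_set U F)"

definition null_vf :: "complex set \<Rightarrow> (complex \<Rightarrow> real^4) \<Rightarrow> (complex \<Rightarrow> complex) \<Rightarrow> complex set \<Rightarrow> bool" where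
  "null_vf U F \<eta> V \<longleftrightarrow> open V \<and> V \<subseteq> U \<and> cinf_on V \<eta>
     \<and> (\<forall>q\<in>V \<inter> sing_set U F. \<eta> q \<noteq> 0 \<and> frechet_derivative F (at q) (\<eta> q) = 0)"

text \<open>Rodrigues-type condition: the velocities of K o gamma and of its unit normal
  N o gamma are parallel (linearly dependent) at every parameter in S.\<close>
definition line_of_curvature :: "(complex \<Rightarrow> real^4) \<Rightarrow> (complex \<Rightarrow> real^4) \<Rightarrow> (real \<Rightarrow> complex) \<Rightarrow> real set \<Rightarrow> bool" where
  "line_of_curvature K N \<gamma> S \<longleftrightarrow> (\<forall>t\<in>S. \<exists>a b. (a, b) \<noteq> (0::real, 0::real) \<and>
      a *\<^sub>R vector_derivative (K \<circ> \<gamma>) (at t) + b *\<^sub>R vector_derivative (N \<circ> \<gamma>) (at t) = 0)"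

definition eta_d :: "(complex \<Rightarrow> complex) \<Rightarrow> (complex \<Rightarrow> real^4) \<Rightarrow> complex \<Rightarrow> real^4" where
  "eta_d \<eta> H = (\<lambda>z. frechet_derivative H (at z) (\<eta> z))"

definition gram :: "real^4 \<Rightarrow> real^4 \<Rightarrow> real" where
  "gram a b = lor a a * lor b b - (lor a b)^2"

text \<open>Cuspidal torsion (Martins-Saji formula transplanted to the space forms in L^4):
  with gh = F o gamma and X = eta eta F along gamma,
  k_t = det(F, gh', X, X')/|gh' ^ X|^2 - det(F, gh', X, gh'') <gh', X> / (|gh'|^2 |gh' ^ X|^2).\<close>
definition cusp_torsion :: "(complex \<Rightarrow> real^4) \<Rightarrow> (real \<Rightarrow> complex) \<Rightarrow> (complex \<Rightarrow> complex) \<Rightarrow> real \<Rightarrow> real" where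
  "cusp_torsion F \<gamma> \<eta> t =
    (let g1 = (\<lambda>s. vector_derivative (F \<circ> \<gamma>) (at s));
         g2 = vector_derivative g1 (at t);
         X = (\<lambda>s. eta_d \<eta> (eta_d \<eta> F) (\<gamma> s));
         X1 = vector_derivative X (at t)
     in det4 (F (\<gamma> t)) (g1 t) (X t) X1 / gram (g1 t) (X t)
        - det4 (F (\<gamma> t)) (g1 t) (X t) g2 * lor (g1 t) (X t)
            / (lor (g1 t) (g1 t) * gram (g1 t) (X t)))"

end

theory Submission
  imports Defs "HOL-Complex_Analysis.Cauchy_Integral_Formula"
begin

(* With e_s = diag(1, s), the two fronts are F_s = A e_s A^*: f = F_1 and g = F_(-1).  As det A = 1,
   X |-> A X A^* is an isometry of L^4, and A' = A D gives dF_s(v) = A (D(v) e_s + e_s D(v)^* ) A^*,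
   the image of the off-diagonal Hermitian matrix with entry W_s(v) = s alpha v + cnj (beta v).
   Everything therefore reduces to plane geometry of complex numbers.  Along gamma the velocities
   of f o gamma and of its unit normal g o gamma are the images of w = W_s(gamma') and
   u = W_(-s)(gamma'), so gamma is a line of curvature iff cross(w, u) = 0; by the Lagrange identity
   the Martins-Saji formula for the cuspidal torsion is a nonzero multiple of the same cross
   product.  The denominators of that formula stay away from 0 near p because at a cuspidal edge
   (normal form (u, v^2, v^3)) the derivative of dF along a null direction leaves the image line of
   dF; in frame coordinates this says cross(w, eta eta F) <> 0. *)

lemma vector_4 [simp]:
 "(vector [x,y,z,w] ::('a::zero)^4)$1 = x"
 "(vector [x,y,z,w] ::('a::zero)^4)$2 = y"
 "(vector [x,y,z,w] ::('a::zero)^4)$3 = z"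
 "(vector [x,y,z,w] ::('a::zero)^4)$4 = w"
  unfolding vector_def by simp_all

lemma vec4_eq_iff: "(x::'a^4) = y \<longleftrightarrow> x$1 = y$1 \<and> x$2 = y$2 \<and> x$3 = y$3 \<and> x$4 = y$4"
  by (simp add: vec_eq_iff forall_4)

lemma mat2_eq_iff:
  "(X::'a^2^2) = Y \<longleftrightarrow> X$1$1 = Y$1$1 \<and> X$1$2 = Y$1$2 \<and> X$2$1 = Y$2$1 \<and> X$2$2 = Y$2$2"
  by (simp add: vec_eq_iff forall_2)

lemma matrix_matrix_mult_2_nth:
  "((X::'a::semiring_1^2^2) ** Y) $ i $ j = X$i$1 * Y$1$j + X$i$2 * Y$2$j"
  by (simp add: matrix_matrix_mult_def sum_2)

lemma matrix_add_rdistrib: "((A::'a::semiring_1^'n^'m) + B) ** (C::'a^'p^'n) = A ** C + B ** C"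
  by (vector matrix_matrix_mult_def sum.distrib[symmetric] field_simps)

lemma matrix_scaleR_left:
  "(r *\<^sub>R (A::'a::real_algebra_1^'n^'m)) ** (B::'a^'p^'n) = r *\<^sub>R (A ** B)"
  by (vector matrix_matrix_mult_def scaleR_sum_right)

lemma matrix_scaleR_right:
  "(A::'a::real_algebra_1^'n^'m) ** (r *\<^sub>R (B::'a^'p^'n)) = r *\<^sub>R (A ** B)"
  by (vector matrix_matrix_mult_def scaleR_sum_right)

lemma det_4:
  "det (A::'a::comm_ring_1^4^4) =
     A $ 1 $ 1 * (A $ 2 $ 2 * (A $ 3 $ 3 * A $ 4 $ 4)) -
     A $ 1 $ 1 * (A $ 2 $ 2 * (A $ 3 $ 4 * A $ 4 $ 3)) +
     (A $ 1 $ 1 * (A $ 2 $ 3 * (A $ 3 $ 4 * A $ 4 $ 2)) -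
      A $ 1 $ 1 * (A $ 2 $ 3 * (A $ 3 $ 2 * A $ 4 $ 4)) +
      (A $ 1 $ 1 * (A $ 2 $ 4 * (A $ 3 $ 2 * A $ 4 $ 3)) -
       A $ 1 $ 1 * (A $ 2 $ 4 * (A $ 3 $ 3 * A $ 4 $ 2)))) +
     (A $ 1 $ 2 * (A $ 2 $ 1 * (A $ 3 $ 4 * A $ 4 $ 3)) -
      A $ 1 $ 2 * (A $ 2 $ 1 * (A $ 3 $ 3 * A $ 4 $ 4)) +
      (A $ 1 $ 2 * (A $ 2 $ 3 * (A $ 3 $ 1 * A $ 4 $ 4)) -
       A $ 1 $ 2 * (A $ 2 $ 3 * (A $ 3 $ 4 * A $ 4 $ 1)) +
       (A $ 1 $ 2 * (A $ 2 $ 4 * (A $ 3 $ 3 * A $ 4 $ 1)) -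
        A $ 1 $ 2 * (A $ 2 $ 4 * (A $ 3 $ 1 * A $ 4 $ 3)))) +
      (A $ 1 $ 3 * (A $ 2 $ 2 * (A $ 3 $ 4 * A $ 4 $ 1)) -
       A $ 1 $ 3 * (A $ 2 $ 2 * (A $ 3 $ 1 * A $ 4 $ 4)) +
       (A $ 1 $ 3 * (A $ 2 $ 1 * (A $ 3 $ 2 * A $ 4 $ 4)) -
        A $ 1 $ 3 * (A $ 2 $ 1 * (A $ 3 $ 4 * A $ 4 $ 2)) +
        (A $ 1 $ 3 * (A $ 2 $ 4 * (A $ 3 $ 1 * A $ 4 $ 2)) -
         A $ 1 $ 3 * (A $ 2 $ 4 * (A $ 3 $ 2 * A $ 4 $ 1)))) +
       (A $ 1 $ 4 * (A $ 2 $ 2 * (A $ 3 $ 1 * A $ 4 $ 3)) -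
        A $ 1 $ 4 * (A $ 2 $ 2 * (A $ 3 $ 3 * A $ 4 $ 1)) +
        (A $ 1 $ 4 * (A $ 2 $ 3 * (A $ 3 $ 2 * A $ 4 $ 1)) -
         A $ 1 $ 4 * (A $ 2 $ 3 * (A $ 3 $ 1 * A $ 4 $ 2)) +
         (A $ 1 $ 4 * (A $ 2 $ 1 * (A $ 3 $ 3 * A $ 4 $ 2)) -
          A $ 1 $ 4 * (A $ 2 $ 1 * (A $ 3 $ 2 * A $ 4 $ 3)))))))"
proof -
  have f1: "finite {2::4, 3, 4}" "1 \<notin> {2::4, 3, 4}" by auto
  have f2: "finite {3::4, 4}" "2 \<notin> {3::4, 4}" by auto
  have f3: "finite {4::4}" "3 \<notin> {4::4}" by auto
  show ?thesis
    unfolding det_def UNIV_4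
    unfolding sum_over_permutations_insert[OF f1]
    unfolding sum_over_permutations_insert[OF f2]
    unfolding sum_over_permutations_insert[OF f3]
    unfolding permutes_sing
    apply (simp only: sum.insert_if finite.intros insert_iff empty_iff sum.empty)
    apply (simp add: sign_compose permutation_swap_id permutation_compose sign_swap_id)
    done
qed

lemma has_derivative_vec_componentwise:
  fixes f :: "'x::real_normed_vector \<Rightarrow> 'b::euclidean_space^'n"
  assumes "\<And>i. ((\<lambda>x. f x $ i) has_derivative (\<lambda>h. f' h $ i)) (at a within S)"
  shows "(f has_derivative f') (at a within S)"
proof (subst has_derivative_componentwise_within, intro ballI)
  fix b :: "'b^'n" assume "b \<in> Basis"
  then obtain i u where b: "b = axis i u" "u \<in> Basis" by (auto simp: Basis_vec_def)
  show "((\<lambda>x. f x \<bullet> b) has_derivative (\<lambda>x. f' x \<bullet> b)) (at a within S)"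
    unfolding b inner_axis using has_derivative_inner_left[OF assms[of i]] .
qed

section \<open>Hermitian matrices and the action of GL(2,C) on L^4\<close>

definition herm_of :: "real^4 \<Rightarrow> complex^2^2" where
  "herm_of x = (\<chi> i j. if i = 1 \<and> j = 1 then complex_of_real (x$1 + x$4)
     else if i = 1 \<and> j = 2 then Complex (x$2) (x$3)
     else if i = 2 \<and> j = 1 then Complex (x$2) (- x$3)
     else complex_of_real (x$1 - x$4))"

lemma herm_of_nth [simp]:
  "herm_of x $ 1 $ 1 = complex_of_real (x$1 + x$4)"
  "herm_of x $ 1 $ 2 = Complex (x$2) (x$3)"
  "herm_of x $ 2 $ 1 = Complex (x$2) (- x$3)"
  "herm_of x $ 2 $ 2 = complex_of_real (x$1 - x$4)"
  by (simp_all add: herm_of_def)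

lemma herm_adj_nth [simp]: "herm_adj X $ i $ j = cnj (X $ j $ i)"
  by (simp add: herm_adj_def)

lemma herm4_nth [simp]:
  "herm4 X $ 1 = Re (X$1$1 + X$2$2) / 2"
  "herm4 X $ 2 = Re (X$1$2)"
  "herm4 X $ 3 = Im (X$1$2)"
  "herm4 X $ 4 = Re (X$1$1 - X$2$2) / 2"
  by (simp_all add: herm4_def)

lemma herm4_herm_of [simp]: "herm4 (herm_of x) = x"
  unfolding vec4_eq_iff by simp

definition hermitian :: "complex^2^2 \<Rightarrow> bool" where
  "hermitian X \<longleftrightarrow> herm_adj X = X"

lemma hermitian_iff:
  "hermitian X \<longleftrightarrow> Im (X$1$1) = 0 \<and> Im (X$2$2) = 0 \<and> X$2$1 = cnj (X$1$2)"
  unfolding hermitian_def mat2_eq_iff by (auto simp: complex_eq_iff)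

lemma herm_of_herm4: "hermitian X \<Longrightarrow> herm_of (herm4 X) = X"
  unfolding hermitian_iff mat2_eq_iff by (auto simp: complex_eq_iff field_simps)

lemma hermitian_herm_of [simp]: "hermitian (herm_of x)"
  by (simp add: hermitian_iff complex_cnj)

lemma herm_adj_mult: "herm_adj (X ** Y) = herm_adj Y ** herm_adj X"
  unfolding mat2_eq_iff by (simp add: matrix_matrix_mult_2_nth mult.commute)

lemma herm_adj_herm_adj [simp]: "herm_adj (herm_adj X) = X"
  unfolding mat2_eq_iff by simp

lemma herm_adj_scaleR: "herm_adj (r *\<^sub>R X) = r *\<^sub>R herm_adj X"
  unfolding mat2_eq_iff by simp

lemma hermitian_conj: "hermitian M \<Longrightarrow> hermitian (B ** M ** herm_adj B)"
  unfolding hermitian_def by (simp add: herm_adj_mult matrix_mul_assoc)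

lemma herm4_add: "herm4 (X + Y) = herm4 X + herm4 Y"
  unfolding vec4_eq_iff by simp (simp add: field_simps)

lemma herm4_scaleR: "herm4 (r *\<^sub>R X) = r *\<^sub>R herm4 X"
  unfolding vec4_eq_iff by simp (simp add: algebra_simps)

lemma bounded_linear_herm4: "bounded_linear herm4"
  by (simp add: linear_conv_bounded_linear[symmetric] linearI herm4_add herm4_scaleR)

lemma bounded_linear_herm_adj: "bounded_linear herm_adj"
  by (simp add: linear_conv_bounded_linear[symmetric] linearI mat2_eq_iff)

lemma herm_of_add: "herm_of (x + y) = herm_of x + herm_of y"
  unfolding mat2_eq_iff by (simp add: complex_eq_iff)

lemma herm_of_scaleR: "herm_of (r *\<^sub>R x) = r *\<^sub>R herm_of x"
  unfolding mat2_eq_iff by (simp add: complex_eq_iff algebra_simps)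

lemma bounded_linear_herm_of: "bounded_linear herm_of"
  by (simp add: linear_conv_bounded_linear[symmetric] linearI herm_of_add herm_of_scaleR)

lemma bounded_bilinear_matrix_mult:
  "bounded_bilinear (\<lambda>(X::complex^2^2) (Y::complex^2^2). X ** Y)"
  unfolding bilinear_conv_bounded_bilinear[symmetric] bilinear_def
  by (auto intro!: linearI simp: matrix_add_rdistrib matrix_add_ldistrib matrix_scaleR_left
      matrix_scaleR_right)

lemma lor_herm4: "hermitian X \<Longrightarrow> lor (herm4 X) (herm4 X) = - Re (det X)"
  unfolding hermitian_iff by (auto simp: det_2 lor_def power2_eq_square field_simps)

lemma lor_add_self: "lor (x + y) (x + y) = lor x x + 2 * lor x y + lor y y"
  by (simp add: lor_def algebra_simps)

lemma lor_nondegenerate: "(\<And>y. lor x y = 0) \<Longrightarrow> x = 0"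
proof -
  assume h: "\<And>y. lor x y = 0"
  have "lor x (vector [- x$1, x$2, x$3, x$4]) = 0" by (rule h)
  then have "(x$1)^2 + (x$2)^2 + (x$3)^2 + (x$4)^2 = 0"
    by (simp add: lor_def power2_eq_square)
  then show "x = 0"
    unfolding vec4_eq_iff by (simp add: add_nonneg_eq_0_iff)
qed

lemma det_herm_adj: "det (herm_adj X) = cnj (det X)"
  by (simp add: det_2)

definition conj_act :: "complex^2^2 \<Rightarrow> real^4 \<Rightarrow> real^4" where
  "conj_act B x = herm4 (B ** herm_of x ** herm_adj B)"

lemma conj_act_add: "conj_act B (x + y) = conj_act B x + conj_act B y"
  by (simp add: conj_act_def herm_of_add matrix_add_ldistrib matrix_add_rdistrib herm4_add)

lemma conj_act_scaleR: "conj_act B (r *\<^sub>R x) = r *\<^sub>R conj_act B x"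
  by (simp add: conj_act_def herm_of_scaleR matrix_scaleR_left matrix_scaleR_right herm4_scaleR)

lemma linear_conj_act: "linear (conj_act B)"
  by (rule linearI) (simp_all add: conj_act_add conj_act_scaleR)

lemma lor_conj_act_self: "lor (conj_act B x) (conj_act B x) = (cmod (det B))^2 * lor x x"
proof -
  have "lor (conj_act B x) (conj_act B x) = - Re (det (B ** herm_of x ** herm_adj B))"
    unfolding conj_act_def by (rule lor_herm4[OF hermitian_conj[OF hermitian_herm_of]])
  also have "\<dots> = - Re (det B * cnj (det B) * det (herm_of x))"
    by (simp add: det_mul det_herm_adj ac_simps)
  also have "\<dots> = (cmod (det B))^2 * (- Re (det (herm_of x)))"
    by (simp only: complex_norm_square[symmetric]) simp
  also have "- Re (det (herm_of x)) = lor x x"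
    using lor_herm4[OF hermitian_herm_of, of x] by simp
  finally show ?thesis .
qed

lemma lor_conj_act: "lor (conj_act B x) (conj_act B y) = (cmod (det B))^2 * lor x y"
  using lor_conj_act_self[of B "x + y"]
  unfolding conj_act_add lor_add_self lor_conj_act_self by (simp add: algebra_simps)

lemma conj_act_eq_0_iff:
  assumes "det B \<noteq> 0"
  shows "conj_act B x = 0 \<longleftrightarrow> x = 0"
proof
  assume "conj_act B x = 0"
  then have "lor x y = 0" for y
    using lor_conj_act[of B x y] assms by (simp add: lor_def)
  then show "x = 0" by (rule lor_nondegenerate)
qed (simp add: linear_0[OF linear_conj_act])

lemma det4_matrix_vector_mult:
  "det4 (M *v a) (M *v b) (M *v c) (M *v d) = det M * det4 a b c d"
proof -
  have "(vector [M *v a, M *v b, M *v c, M *v d] :: real^4^4) = vector [a, b, c, d] ** transpose M"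
    by (simp add: vec_eq_iff forall_4 matrix_matrix_mult_def matrix_vector_mult_def
        transpose_def sum_4 mult.commute)
  then show ?thesis unfolding det4_def by (simp add: det_mul)
qed

lemma det4_conj_act:
  assumes "det B \<noteq> 0"
  obtains k where "k \<noteq> 0"
    "\<And>a b c d. det4 (conj_act B a) (conj_act B b) (conj_act B c) (conj_act B d) = k * det4 a b c d"
proof -
  let ?M = "matrix (conj_act B)"
  have "inj (conj_act B)"
    using conj_act_eq_0_iff[OF assms] linear_injective_0[OF linear_conj_act] by blast
  then have "det ?M \<noteq> 0" using det_nz_iff_inj[OF linear_conj_act] by blast
  moreover have "conj_act B x = ?M *v x" for x
    using matrix_vector_mul(2)[OF linear_conj_act, of B] by metis
  ultimately show ?thesis by (intro that[of "det ?M"]) (simp_all add: det4_matrix_vector_mult)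
qed

definition lie_act :: "complex^2^2 \<Rightarrow> real^4 \<Rightarrow> real^4" where
  "lie_act D x = herm4 (D ** herm_of x + herm_of x ** herm_adj D)"

lemma herm_of_lie_act: "herm_of (lie_act D x) = D ** herm_of x + herm_of x ** herm_adj D"
  unfolding lie_act_def
  by (rule herm_of_herm4) (simp add: hermitian_iff matrix_matrix_mult_2_nth complex_cnj algebra_simps)

lemma lie_act_scaleR: "lie_act (r *\<^sub>R D) x = r *\<^sub>R lie_act D x"
  by (simp add: lie_act_def herm_adj_scaleR matrix_scaleR_left matrix_scaleR_right herm4_scaleR
      flip: scaleR_right_distrib)

lemma lie_act_zero [simp]: "lie_act D 0 = 0"
  unfolding lie_act_def vec4_eq_iff by (simp add: herm_of_def matrix_matrix_mult_2_nth)

lemma has_derivative_conj_act: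
  fixes A :: "'x::real_normed_vector \<Rightarrow> complex^2^2" and m :: "'x \<Rightarrow> real^4"
  assumes A: "(A has_derivative (\<lambda>h. A x ** DD h)) (at x within S)"
      and m: "(m has_derivative m') (at x within S)"
  shows "((\<lambda>y. conj_act (A y) (m y)) has_derivative
           (\<lambda>h. conj_act (A x) (lie_act (DD h) (m x) + m' h))) (at x within S)"
proof -
  note mult = bounded_bilinear.FDERIV[OF bounded_bilinear_matrix_mult]
  have M: "((\<lambda>y. herm_of (m y)) has_derivative (\<lambda>h. herm_of (m' h))) (at x within S)"
    using bounded_linear.has_derivative[OF bounded_linear_herm_of m] .
  have A': "((\<lambda>y. herm_adj (A y)) has_derivative (\<lambda>h. herm_adj (A x ** DD h))) (at x within S)"
    using bounded_linear.has_derivative[OF bounded_linear_herm_adj A] .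
  have "((\<lambda>y. herm4 (A y ** herm_of (m y) ** herm_adj (A y))) has_derivative
     (\<lambda>h. herm4 ((A x ** herm_of (m x)) ** herm_adj (A x ** DD h)
        + (A x ** herm_of (m' h) + (A x ** DD h) ** herm_of (m x)) ** herm_adj (A x)))) (at x within S)"
    by (intro bounded_linear.has_derivative[OF bounded_linear_herm4] mult[OF mult[OF A M] A'])
  then show ?thesis
    unfolding conj_act_def
    by (rule has_derivative_eq_rhs)
      (simp add: fun_eq_iff herm_of_add herm_of_lie_act herm_adj_mult matrix_mul_assoc
        matrix_add_ldistrib matrix_add_rdistrib algebra_simps)
qed

lemma conj_act_has_vector_derivative:
  fixes B :: "real \<Rightarrow> complex^2^2" and m :: "real \<Rightarrow> real^4"
  assumes B: "(B has_vector_derivative B t ** D) (at t)"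
      and m: "(m has_vector_derivative m') (at t)"
  shows "((\<lambda>r. conj_act (B r) (m r)) has_vector_derivative
           conj_act (B t) (lie_act D (m t) + m')) (at t)"
proof -
  have "(B has_derivative (\<lambda>h. B t ** (h *\<^sub>R D))) (at t)"
    using B unfolding has_vector_derivative_def
    by (simp add: matrix_scaleR_right)
  from has_derivative_conj_act[OF this m[unfolded has_vector_derivative_def]] show ?thesis
    unfolding has_vector_derivative_def
    by (simp add: lie_act_scaleR conj_act_scaleR flip: scaleR_right_distrib)
qed

lemma has_derivative_of_matrix_ode:
  fixes A :: "complex \<Rightarrow> complex^2^2"
  assumes "\<forall>i j. ((\<lambda>w. A w $ i $ j) has_field_derivative ((A z ** Dmat a b) $ i $ j)) (at z)"
  shows "(A has_derivative (\<lambda>h. A z ** Dmat (a * h) (b * h))) (at z)"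
proof -
  have "(\<lambda>h. (A z ** Dmat (a * h) (b * h)) $ i $ j) = (*) ((A z ** Dmat a b) $ i $ j)" for i j
    using exhaust_2[of i] exhaust_2[of j]
    by (auto simp: fun_eq_iff matrix_matrix_mult_2_nth Dmat_def algebra_simps)
  with assms show ?thesis
    unfolding has_field_derivative_def by (intro has_derivative_vec_componentwise) simp
qed

definition base_pt :: "real \<Rightarrow> real^4" where
  "base_pt s = vector [(1 + s) / 2, 0, 0, (1 - s) / 2]"

definition off_diag :: "complex \<Rightarrow> real^4" where
  "off_diag w = vector [0, Re w, Im w, 0]"

lemma base_pt_nth [simp]:
  "base_pt s $ 1 = (1 + s) / 2" "base_pt s $ 2 = 0" "base_pt s $ 3 = 0" "base_pt s $ 4 = (1 - s) / 2"
  by (simp_all add: base_pt_def)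

lemma off_diag_nth [simp]:
  "off_diag w $ 1 = 0" "off_diag w $ 2 = Re w" "off_diag w $ 3 = Im w" "off_diag w $ 4 = 0"
  by (simp_all add: off_diag_def)

lemma herm_of_base_pt_one: "herm_of (base_pt 1) = mat 1"
  unfolding mat2_eq_iff by (simp add: mat_def complex_eq_iff)

lemma herm_of_base_pt_minus_one: "herm_of (base_pt (-1)) = e3"
  unfolding mat2_eq_iff by (simp add: e3_def complex_eq_iff)

lemma off_diag_add: "off_diag (a + b) = off_diag a + off_diag b"
  unfolding vec4_eq_iff by simp

lemma off_diag_of_real_mult: "off_diag (complex_of_real r * a) = r *\<^sub>R off_diag a"
  unfolding vec4_eq_iff by simp

lemma off_diag_zero [simp]: "off_diag 0 = 0"
  unfolding vec4_eq_iff by simp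

lemma off_diag_eq_0_iff [simp]: "off_diag a = 0 \<longleftrightarrow> a = 0"
  unfolding vec4_eq_iff by (simp add: complex_eq_iff)

lemma bounded_linear_off_diag: "bounded_linear off_diag"
  by (simp add: linear_conv_bounded_linear[symmetric] linearI off_diag_add
      off_diag_of_real_mult[unfolded scaleR_conv_of_real[symmetric]])

lemma off_diag_has_vector_derivative:
  "(m has_vector_derivative m') F \<Longrightarrow> ((\<lambda>r. off_diag (m r)) has_vector_derivative off_diag m') F"
  unfolding has_vector_derivative_def
  by (drule bounded_linear.has_derivative[OF bounded_linear_off_diag])
    (simp add: off_diag_of_real_mult[unfolded scaleR_conv_of_real[symmetric]])

definition cross_c :: "complex \<Rightarrow> complex \<Rightarrow> real" where
  "cross_c a b = Re a * Im b - Im a * Re b"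

definition normal_coord :: "real \<Rightarrow> real^4 \<Rightarrow> real" where
  "normal_coord s z = (1 + s) / 2 * z$4 - (1 - s) / 2 * z$1"

lemma det4_base_pt_off_diag:
  "det4 (base_pt s) (off_diag a) (off_diag b) z = cross_c a b * normal_coord s z"
  unfolding det4_def det_4 by (simp add: cross_c_def normal_coord_def) (simp add: field_simps)

lemma lor_off_diag: "lor (off_diag a) (off_diag b) = a \<bullet> b"
  by (simp add: lor_def inner_complex_def)

lemma gram_off_diag: "gram (off_diag a) (off_diag b) = (cross_c a b)^2"
  by (simp add: gram_def lor_off_diag inner_complex_def cross_c_def power2_eq_square algebra_simps)

definition dfront_coord :: "real \<Rightarrow> complex \<Rightarrow> complex \<Rightarrow> complex \<Rightarrow> complex" where
  "dfront_coord s a b v = complex_of_real s * a * v + cnj (b * v)"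

lemma lie_act_base_pt: "lie_act (Dmat a b) (base_pt s) = off_diag (dfront_coord s a b 1)"
  unfolding lie_act_def vec4_eq_iff
  by (simp add: matrix_matrix_mult_2_nth Dmat_def dfront_coord_def) (simp add: field_simps)

lemma normal_coord_lie_act_off_diag:
  "normal_coord s (lie_act (Dmat a b) (off_diag c) + off_diag d) = - (dfront_coord (-s) a b 1 \<bullet> c)"
  unfolding lie_act_def normal_coord_def dfront_coord_def inner_complex_def
  by (simp add: matrix_matrix_mult_2_nth Dmat_def) (simp add: field_simps)

lemma dfront_coord_add: "dfront_coord s a b (v + w) = dfront_coord s a b v + dfront_coord s a b w"
  by (simp add: dfront_coord_def algebra_simps)

lemma dfront_coord_of_real_mult:
  "dfront_coord s a b (complex_of_real r * v) = complex_of_real r * dfront_coord s a b v"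
  by (simp add: dfront_coord_def algebra_simps)

lemma dfront_coord_eq_one: "dfront_coord s a b v = dfront_coord s (a * v) (b * v) 1"
  by (simp add: dfront_coord_def)

lemma dfront_coord_rescale:
  "dfront_coord s (a * (complex_of_real k * e)) (b * (complex_of_real k * e)) (complex_of_real k * e)
     = complex_of_real (k^2) * dfront_coord s (a * e) (b * e) e"
  by (simp add: dfront_coord_def power2_eq_square algebra_simps)

lemma norm_eq_if_dfront_coord_eq_0:
  assumes "s^2 = 1" "dfront_coord s a b v = 0" "v \<noteq> 0"
  shows "cmod a = cmod b"
proof -
  have "complex_of_real s * a * v = - cnj (b * v)"
    using assms(2) by (simp add: dfront_coord_def add_eq_0_iff)
  then have "cmod (complex_of_real s * a * v) = cmod (b * v)"
    by (metis complex_mod_cnj norm_minus_cancel)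
  moreover have "\<bar>s\<bar> = 1" using assms(1) by (auto simp: power2_eq_1_iff)
  ultimately have "cmod a * cmod v = cmod b * cmod v" by (simp add: norm_mult)
  then show ?thesis using assms(3) by simp
qed

lemma dfront_coord_nonzero_root:
  assumes "s^2 = 1" "cmod a = cmod b" "a \<noteq> 0"
  obtains v where "v \<noteq> 0" "dfront_coord s a b v = 0"
proof -
  have s0: "s \<noteq> 0" and abss: "\<bar>s\<bar> = 1" using assms(1) by (auto simp: power2_eq_1_iff)
  have b0: "b \<noteq> 0" using assms(2,3) by auto
  define q where "q = - cnj b / (complex_of_real s * a)"
  define v where "v = csqrt q"
  have "cmod q = 1" unfolding q_def using assms abss s0 b0 by (simp add: norm_divide norm_mult)
  then have vv: "v * cnj v = 1"
    unfolding v_def using complex_norm_square[of "csqrt q"]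
    by (metis norm_csqrt of_real_1 one_power2 real_sqrt_one)
  have cb: "cnj b = - (v^2 * complex_of_real s * a)"
    unfolding v_def q_def using s0 assms(3) by (simp add: field_simps)
  have "dfront_coord s a b v = complex_of_real s * a * (v - v^2 * cnj v)"
    by (simp add: dfront_coord_def cb algebra_simps)
  also have "v^2 * cnj v = v" using vv by (simp add: power2_eq_square mult.assoc)
  finally have "dfront_coord s a b v = 0" by simp
  moreover have "v \<noteq> 0" using vv by auto
  ultimately show ?thesis using that by blast
qed

lemma cross_c_dfront_coord:
  "cross_c (dfront_coord s a b v1) (dfront_coord s a b v2) = (s^2 * (cmod a)^2 - (cmod b)^2) * cross_c v1 v2"
  unfolding cross_c_def dfront_coord_def cmod_power2 by (simp add: power2_eq_square algebra_simps)

lemma cross_c_add_right: "cross_c a (b + c) = cross_c a b + cross_c a c"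
  by (simp add: cross_c_def algebra_simps)

lemma cross_c_of_real_mult_right: "cross_c a (complex_of_real r * b) = r * cross_c a b"
  by (simp add: cross_c_def algebra_simps)

lemma cross_c_eq_0_imp_parallel:
  assumes "cross_c a b = 0" "a \<noteq> 0"
  shows "b = complex_of_real ((a \<bullet> b) / (a \<bullet> a)) * a"
proof -
  have "complex_of_real (a \<bullet> a) * b - complex_of_real (a \<bullet> b) * a
      = complex_of_real (cross_c a b) * (\<i> * a)"
    by (simp add: complex_eq_iff inner_complex_def cross_c_def algebra_simps)
  moreover have "a \<bullet> a \<noteq> 0" using assms(2) by simp
  ultimately show ?thesis using assms(1) by (simp add: field_simps)
qed

lemma cross_c_decomp:
  assumes "cross_c k v \<noteq> 0"
  shows "w = complex_of_real (cross_c w v / cross_c k v) * k + complex_of_real (cross_c k w / cross_c k v) * v"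
proof -
  have "complex_of_real (cross_c k v) * w
      = complex_of_real (cross_c w v) * k + complex_of_real (cross_c k w) * v"
    by (simp add: complex_eq_iff cross_c_def algebra_simps)
  then show ?thesis using assms by (simp add: field_simps)
qed

lemma real_dependent_iff_cross_c:
  assumes "w \<noteq> 0"
  shows "(\<exists>x y::real. (x, y) \<noteq> (0, 0) \<and> complex_of_real x * w + complex_of_real y * u = 0)
    \<longleftrightarrow> cross_c w u = 0"
proof
  assume "\<exists>x y::real. (x, y) \<noteq> (0, 0) \<and> complex_of_real x * w + complex_of_real y * u = 0"
  then obtain x y :: real where xy: "(x, y) \<noteq> (0, 0)" "complex_of_real x * w + complex_of_real y * u = 0"
    by blast
  have "cross_c w (complex_of_real x * w + complex_of_real y * u) = y * cross_c w u"
    "cross_c u (complex_of_real x * w + complex_of_real y * u) = - x * cross_c w u"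
    by (simp_all add: cross_c_def algebra_simps)
  then have "y * cross_c w u = 0" "x * cross_c w u = 0" using xy(2) by (simp_all add: cross_c_def)
  then show "cross_c w u = 0" using xy(1) by auto
next
  assume "cross_c w u = 0"
  then have "u = complex_of_real ((w \<bullet> u) / (w \<bullet> w)) * w"
    using cross_c_eq_0_imp_parallel assms by blast
  then have "complex_of_real ((w \<bullet> u) / (w \<bullet> w)) * w + complex_of_real (-1) * u = 0"
    by simp
  then show "\<exists>x y::real. (x, y) \<noteq> (0, 0) \<and> complex_of_real x * w + complex_of_real y * u = 0"
    by (intro exI[of _ "(w \<bullet> u) / (w \<bullet> w)"] exI[of _ "-1"]) simp
qed

lemma dfront_coord_kernel_dim_one:
  assumes "dfront_coord s a b k = 0" "dfront_coord s a b v = 0" "dfront_coord s a b w \<noteq> 0" "k \<noteq> 0"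
  obtains \<kappa> where "v = complex_of_real \<kappa> * k"
proof (cases "cross_c k v = 0")
  case True
  then show ?thesis using cross_c_eq_0_imp_parallel[OF True assms(4)] that by blast
next
  case False
  have "dfront_coord s a b w = complex_of_real (cross_c w v / cross_c k v) * dfront_coord s a b k
      + complex_of_real (cross_c k w / cross_c k v) * dfront_coord s a b v"
    by (subst cross_c_decomp[OF False, of w]) (simp only: dfront_coord_add dfront_coord_of_real_mult)
  then show ?thesis using assms by simp
qed

lemma lagrange_identity_complex:
  "(u \<bullet> c) * (w \<bullet> w) - (u \<bullet> w) * (w \<bullet> c) = cross_c w u * cross_c w c"
  by (simp add: inner_complex_def cross_c_def algebra_simps)

(* The Martins-Saji expression for F = B e_s, F' = B w, eta eta F = B c, (eta eta F)' = B Y1 and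
   F'' = B Y2, where B acts by conj_act. *)
definition frame_torsion :: "complex^2^2 \<Rightarrow> real \<Rightarrow> complex \<Rightarrow> complex \<Rightarrow> real^4 \<Rightarrow> real^4 \<Rightarrow> real" where
  "frame_torsion B s w c Y1 Y2 =
    (let F = conj_act B (base_pt s); G = conj_act B (off_diag w); X = conj_act B (off_diag c)
     in det4 F G X (conj_act B Y1) / gram G X - det4 F G X (conj_act B Y2) * lor G X / (lor G G * gram G X))"

lemma frame_torsion_eq_0_iff:
  assumes dB: "cmod (det B) = 1" and w: "w \<noteq> 0" and wc: "cross_c w c \<noteq> 0"
    and Y1: "normal_coord s Y1 = - (u \<bullet> c)" and Y2: "normal_coord s Y2 = - (u \<bullet> w)"
  shows "frame_torsion B s w c Y1 Y2 = 0 \<longleftrightarrow> cross_c w u = 0"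
proof -
  have "det B \<noteq> 0" using dB by auto
  then obtain k where k: "k \<noteq> 0"
    "\<And>a b c d. det4 (conj_act B a) (conj_act B b) (conj_act B c) (conj_act B d) = k * det4 a b c d"
    by (rule det4_conj_act) auto
  have ww: "w \<bullet> w > 0" using w by simp
  have ratio: "k * (x * Q1) / x^2 - k * (x * Q2) * L / (N * x^2) = k * (Q1 * N - Q2 * L) / (x * N)"
    if "x \<noteq> 0" "N \<noteq> 0" for x N L Q1 Q2 :: real
    using that by (simp add: field_simps power2_eq_square)
  have d: "det4 (conj_act B (base_pt s)) (conj_act B (off_diag w)) (conj_act B (off_diag c)) (conj_act B Y)
      = k * (cross_c w c * normal_coord s Y)" for Y
    by (simp only: k det4_base_pt_off_diag)
  have "gram (conj_act B x) (conj_act B y) = gram x y" for x y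
    by (simp add: gram_def lor_conj_act dB)
  then have g: "gram (conj_act B (off_diag w)) (conj_act B (off_diag c)) = (cross_c w c)^2"
    by (simp add: gram_off_diag)
  have l: "lor (conj_act B (off_diag a)) (conj_act B (off_diag b)) = a \<bullet> b" for a b
    by (simp add: lor_conj_act dB lor_off_diag)
  have "normal_coord s Y1 * (w \<bullet> w) - normal_coord s Y2 * (w \<bullet> c)
      = - ((u \<bullet> c) * (w \<bullet> w) - (u \<bullet> w) * (w \<bullet> c))"
    unfolding Y1 Y2 by (simp add: algebra_simps)
  also have "\<dots> = - (cross_c w u * cross_c w c)"
    by (simp only: lagrange_identity_complex)
  finally have Y: "normal_coord s Y1 * (w \<bullet> w) - normal_coord s Y2 * (w \<bullet> c) = - (cross_c w u * cross_c w c)" .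
  have "frame_torsion B s w c Y1 Y2 = k * (- (cross_c w u * cross_c w c)) / (cross_c w c * (w \<bullet> w))"
    unfolding frame_torsion_def Let_def d g l Y[symmetric] using ww by (intro ratio wc) simp
  then show ?thesis using k ww wc by simp
qed

section \<open>Cuspidal edges\<close>

lemma cinf_on_has_derivative:
  assumes "cinf_on S f" "x \<in> S"
  shows "(f has_derivative frechet_derivative f (at x)) (at x)"
proof -
  have "dd [] f differentiable (at x)" using assms unfolding cinf_on_def by blast
  then show ?thesis by (simp add: frechet_derivative_works)
qed

lemma cinf_on_directional_derivative_differentiable:
  assumes "cinf_on S f" "x \<in> S"
  shows "(\<lambda>y. frechet_derivative f (at y) v) differentiable (at x)"
proof -
  have "dd [v] f differentiable (at x)" using assms unfolding cinf_on_def by blast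
  then show ?thesis by simp
qed

lemma frechet_derivative_left_inverse:
  assumes f: "(f has_derivative f') (at x)" and g: "(g has_derivative g') (at (f x))"
    and S: "open S" "x \<in> S" and inv: "\<And>y. y \<in> S \<Longrightarrow> g (f y) = y"
  shows "g' (f' v) = v"
proof -
  have "((\<lambda>y. g (f y)) has_derivative (\<lambda>v. g' (f' v))) (at x)"
    using diff_chain_at[OF f g] by (simp add: o_def)
  moreover have "((\<lambda>y. g (f y)) has_derivative (\<lambda>v. v)) (at x)"
    using has_derivative_transform_within_open[OF has_derivative_ident S] inv by force
  ultimately have "(\<lambda>v. g' (f' v)) = (\<lambda>v. v)" by (rule has_derivative_unique)
  then show ?thesis by metis
qed

lemma local_diffeo_inverse_derivative:
  assumes "local_diffeo V \<phi>" "x \<in> V"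
  shows "frechet_derivative (inv_into V \<phi>) (at (\<phi> x)) (frechet_derivative \<phi> (at x) v) = v"
proof -
  have "(\<phi> has_derivative frechet_derivative \<phi> (at x)) (at x)"
    and "(inv_into V \<phi> has_derivative frechet_derivative (inv_into V \<phi>) (at (\<phi> x))) (at (\<phi> x))"
    using assms cinf_on_has_derivative unfolding local_diffeo_def by blast+
  from frechet_derivative_left_inverse[OF this _ assms(2)] show ?thesis
    using assms(1) unfolding local_diffeo_def by auto
qed

lemma local_diffeo_derivative_inverse:
  assumes "local_diffeo V \<phi>" "y \<in> \<phi> ` V"
  shows "frechet_derivative \<phi> (at (inv_into V \<phi> y)) (frechet_derivative (inv_into V \<phi>) (at y) v) = v"
proof -
  have "(inv_into V \<phi> has_derivative frechet_derivative (inv_into V \<phi>) (at y)) (at y)"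
    and "(\<phi> has_derivative frechet_derivative \<phi> (at (inv_into V \<phi> y))) (at (inv_into V \<phi> y))"
    using assms cinf_on_has_derivative inv_into_into unfolding local_diffeo_def by metis+
  from frechet_derivative_left_inverse[OF this _ assms(2)] show ?thesis
    using assms(1) unfolding local_diffeo_def by (auto simp: f_inv_into_f)
qed

definition cusp_germ :: "complex \<Rightarrow> real^4" where
  "cusp_germ x = vector [Re x, (Im x)^2, (Im x)^3, 0]"

definition cusp_germ_deriv :: "complex \<Rightarrow> complex \<Rightarrow> real^4" where
  "cusp_germ_deriv x v = vector [Re v, 2 * Im x * Im v, 3 * (Im x)^2 * Im v, 0]"

lemma cusp_germ_has_derivative: "(cusp_germ has_derivative cusp_germ_deriv x) (at x)"
proof (rule has_derivative_vec_componentwise)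
  fix i :: 4
  have "((\<lambda>y. (Im y)^n) has_derivative (\<lambda>h. of_nat n * Im x ^ (n - 1) * Im h)) (at x)" for n
    using has_derivative_power[OF has_derivative_Im[OF has_derivative_ident], of n]
    by (rule has_derivative_eq_rhs) (simp add: fun_eq_iff)
  from this[of 2] this[of 3] show "((\<lambda>y. cusp_germ y $ i) has_derivative (\<lambda>h. cusp_germ_deriv x h $ i)) (at x)"
    using exhaust_4[of i]
    by (auto simp: cusp_germ_def cusp_germ_deriv_def intro: has_derivative_Re[OF has_derivative_ident])
qed

lemma cusp_germ_deriv_0: "cusp_germ_deriv 0 a = vector [Re a, 0, 0, 0]"
  by (simp add: cusp_germ_deriv_def)

lemma cusp_germ_deriv_eq_0: "Im x \<noteq> 0 \<Longrightarrow> cusp_germ_deriv x a = 0 \<Longrightarrow> a = 0"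
  by (simp add: cusp_germ_deriv_def vec4_eq_iff complex_eq_iff)

lemma cusp_germ_imag_axis:
  "cusp_germ (complex_of_real r * \<i>) = r^2 *\<^sub>R axis 2 1 + r^3 *\<^sub>R axis 3 1"
  "cusp_germ_deriv (complex_of_real r * \<i>) \<i> = (2 * r) *\<^sub>R axis 2 1 + (3 * r^2) *\<^sub>R axis 3 1"
  by (simp_all add: cusp_germ_def cusp_germ_deriv_def vec4_eq_iff axis_def)

locale cusp_chart =
  fixes U :: "complex set" and F :: "complex \<Rightarrow> real^4" and dF :: "complex \<Rightarrow> complex \<Rightarrow> real^4"
    and p :: complex and V :: "complex set" and \<phi> :: "complex \<Rightarrow> complex"
    and W :: "(real^4) set" and \<Phi> :: "real^4 \<Rightarrow> real^4"
  assumes F_deriv: "\<And>z. z \<in> U \<Longrightarrow> (F has_derivative dF z) (at z)"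
    and V0: "0 \<in> V" and diffeo_V: "local_diffeo V \<phi>" and \<phi>0: "\<phi> 0 = p" and \<phi>V: "\<phi> ` V \<subseteq> U"
    and diffeo_W: "local_diffeo W \<Phi>" and FW: "F ` \<phi> ` V \<subseteq> W"
    and normal_form: "\<And>x. x \<in> V \<Longrightarrow> \<Phi> (F (\<phi> x)) = cusp_germ x"
begin

abbreviation "\<psi> \<equiv> inv_into V \<phi>"
abbreviation "\<Psi> \<equiv> inv_into W \<Phi>"
abbreviation "d\<phi> x \<equiv> frechet_derivative \<phi> (at x)"
abbreviation "d\<psi> y \<equiv> frechet_derivative \<psi> (at y)"
abbreviation "d\<Psi> y \<equiv> frechet_derivative \<Psi> (at y)"

lemma p_in_image: "p \<in> \<phi> ` V"
  using V0 \<phi>0 by blast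

lemma \<psi>_p: "\<psi> p = 0"
  using diffeo_V V0 \<phi>0 unfolding local_diffeo_def by (metis inv_into_f_f)

lemma germ_in_chart: "x \<in> V \<Longrightarrow> cusp_germ x \<in> \<Phi> ` W"
  using normal_form FW by (metis image_eqI image_subset_iff)

lemma F_eq_germ: "x \<in> V \<Longrightarrow> F (\<phi> x) = \<Psi> (cusp_germ x)"
  using normal_form FW diffeo_W unfolding local_diffeo_def by (metis image_subset_iff inv_into_f_f imageI)

lemma linear_d\<phi>: "x \<in> V \<Longrightarrow> linear (d\<phi> x)"
  using diffeo_V cinf_on_has_derivative has_derivative_linear unfolding local_diffeo_def by blast

lemma linear_d\<Psi>: "y \<in> \<Phi> ` W \<Longrightarrow> linear (d\<Psi> y)"
  using diffeo_W cinf_on_has_derivative has_derivative_linear unfolding local_diffeo_def by blast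

lemma d\<Psi>_eq_0: "y \<in> \<Phi> ` W \<Longrightarrow> d\<Psi> y v = 0 \<Longrightarrow> v = 0"
  using local_diffeo_derivative_inverse[OF diffeo_W, of y v] diffeo_W
    cinf_on_has_derivative[THEN has_derivative_linear, THEN linear_0]
  unfolding local_diffeo_def by (metis inv_into_into)

lemma dF_normal_form: "x \<in> V \<Longrightarrow> dF (\<phi> x) (d\<phi> x a) = d\<Psi> (cusp_germ x) (cusp_germ_deriv x a)"
proof -
  assume x: "x \<in> V"
  have "(F \<circ> \<phi> has_derivative dF (\<phi> x) \<circ> d\<phi> x) (at x)"
    using diffeo_V x \<phi>V unfolding local_diffeo_def
    by (intro diff_chain_at cinf_on_has_derivative F_deriv) auto
  then have "(\<Psi> \<circ> cusp_germ has_derivative dF (\<phi> x) \<circ> d\<phi> x) (at x)"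
    using diffeo_V x unfolding local_diffeo_def
    by (elim has_derivative_transform_within_open) (auto simp: F_eq_germ)
  moreover have "(\<Psi> \<circ> cusp_germ has_derivative d\<Psi> (cusp_germ x) \<circ> cusp_germ_deriv x) (at x)"
    using diffeo_W germ_in_chart[OF x] unfolding local_diffeo_def
    by (intro diff_chain_at cusp_germ_has_derivative cinf_on_has_derivative) auto
  ultimately have "dF (\<phi> x) \<circ> d\<phi> x = d\<Psi> (cusp_germ x) \<circ> cusp_germ_deriv x"
    by (rule has_derivative_unique)
  then show ?thesis by (metis comp_apply)
qed

lemma dF_at_p: "dF p v = d\<Psi> (cusp_germ 0) (vector [Re (d\<psi> p v), 0, 0, 0])"
  using dF_normal_form[OF V0, of "d\<psi> p v"] local_diffeo_derivative_inverse[OF diffeo_V p_in_image]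
  by (simp add: \<phi>0 \<psi>_p cusp_germ_deriv_0)

lemma immersion_off_edge:
  assumes x: "x \<in> V" and im: "Im x \<noteq> 0"
  shows "inj (dF (\<phi> x))"
proof -
  have "v = 0" if v: "dF (\<phi> x) v = 0" for v
  proof -
    define a where "a = d\<psi> (\<phi> x) v"
    have va: "d\<phi> x a = v"
      using local_diffeo_derivative_inverse[OF diffeo_V, of "\<phi> x" v] diffeo_V x
      unfolding a_def local_diffeo_def by (simp add: inv_into_f_f)
    then have "cusp_germ_deriv x a = 0"
      using dF_normal_form[OF x, of a] v d\<Psi>_eq_0 germ_in_chart[OF x] by simp
    then have "a = 0" by (rule cusp_germ_deriv_eq_0[OF im])
    then show "v = 0" using va linear_0[OF linear_d\<phi>[OF x]] by simp
  qed
  moreover have "linear (dF (\<phi> x))" using F_deriv \<phi>V x has_derivative_linear by blast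
  ultimately show ?thesis using linear_injective_0 by blast
qed

(* A singular curve stays on the edge Im = 0 of the normal form, so its chart velocity is real. *)
lemma singular_curve_chart_velocity_real:
  assumes \<epsilon>: "\<epsilon> > 0" and \<gamma>0: "\<gamma> 0 = p" and \<gamma>1: "(\<gamma> has_vector_derivative \<gamma>1) (at 0)"
    and sing: "\<And>t. t \<in> {-\<epsilon><..<\<epsilon>} \<Longrightarrow> \<gamma> t \<in> sing_set U F"
  shows "Im (d\<psi> p \<gamma>1) = 0"
proof -
  have d\<psi>: "(\<psi> has_derivative d\<psi> p) (at p)"
    using diffeo_V p_in_image cinf_on_has_derivative unfolding local_diffeo_def by blast
  have "open (\<phi> ` V)" using diffeo_V unfolding local_diffeo_def by blast
  then obtain e where e: "e > 0" "\<And>t. dist t 0 < e \<Longrightarrow> \<gamma> t \<in> \<phi> ` V"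
    using has_vector_derivative_continuous[OF \<gamma>1] p_in_image \<gamma>0
    unfolding continuous_at_eps_delta open_dist by (metis dist_commute)
  define \<delta> where "\<delta> = min e \<epsilon>"
  have \<delta>: "\<delta> > 0" using e(1) \<epsilon> unfolding \<delta>_def by simp
  have Im0: "Im (\<psi> (\<gamma> t)) = 0" if t: "t \<in> ball 0 \<delta>" for t
  proof -
    have "\<gamma> t \<in> \<phi> ` V" "\<gamma> t \<in> sing_set U F"
      using e(2) sing t unfolding \<delta>_def by (auto simp: dist_real_def abs_less_iff)
    then obtain x where x: "x \<in> V" "\<gamma> t = \<phi> x" "\<psi> (\<gamma> t) = x"
      using diffeo_V unfolding local_diffeo_def by (auto simp: inv_into_f_f)
    with \<open>\<gamma> t \<in> sing_set U F\<close> have "\<not> inj (dF (\<phi> x))"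
      using F_deriv[THEN frechet_derivative_at] unfolding sing_set_def by auto
    then show ?thesis using immersion_off_edge[OF x(1)] x(3) by blast
  qed
  have "((\<lambda>t. Im (\<psi> (\<gamma> t))) has_derivative (\<lambda>h. 0)) (at 0)"
    by (rule has_derivative_transform_within_open[OF has_derivative_const open_ball
          centre_in_ball[THEN iffD2, OF \<delta>]]) (simp add: Im0)
  moreover have "((\<lambda>t. Im (\<psi> (\<gamma> t))) has_derivative (\<lambda>h. Im (d\<psi> p (h *\<^sub>R \<gamma>1)))) (at 0)"
    using has_derivative_Im[OF diff_chain_at[OF \<gamma>1[unfolded has_vector_derivative_def] d\<psi>[folded \<gamma>0]]]
    by (simp add: o_def \<gamma>0)
  ultimately have "(\<lambda>h. Im (d\<psi> p (h *\<^sub>R \<gamma>1))) = (\<lambda>h. 0)" using has_derivative_unique by blast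
  then show ?thesis by (metis scaleR_one)
qed

lemma dF_singular_curve_velocity_nonzero:
  assumes \<epsilon>: "\<epsilon> > 0" and \<gamma>0: "\<gamma> 0 = p" and \<gamma>1: "(\<gamma> has_vector_derivative \<gamma>1) (at 0)" "\<gamma>1 \<noteq> 0"
    and sing: "\<And>t. t \<in> {-\<epsilon><..<\<epsilon>} \<Longrightarrow> \<gamma> t \<in> sing_set U F"
  shows "dF p \<gamma>1 \<noteq> 0"
proof
  assume "dF p \<gamma>1 = 0"
  then have "d\<Psi> (cusp_germ 0) (vector [Re (d\<psi> p \<gamma>1), 0, 0, 0]) = 0"
    by (simp add: dF_at_p)
  then have "vector [Re (d\<psi> p \<gamma>1), 0, 0, 0] = (0::real^4)"
    by (rule d\<Psi>_eq_0[OF germ_in_chart[OF V0]])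
  then have "Re (d\<psi> p \<gamma>1) = 0" by (simp add: vec4_eq_iff)
  with singular_curve_chart_velocity_real[OF \<epsilon> \<gamma>0 \<gamma>1(1) sing] have "d\<psi> p \<gamma>1 = 0"
    by (simp add: complex_eq_iff)
  moreover have "d\<phi> 0 (d\<psi> p \<gamma>1) = \<gamma>1"
    using local_diffeo_derivative_inverse[OF diffeo_V p_in_image] by (simp add: \<psi>_p)
  ultimately show False using \<gamma>1(2) linear_0[OF linear_d\<phi>[OF V0]] by simp
qed

lemma chart_axis_field_differentiable:
  "(\<lambda>r. d\<Psi> (cusp_germ (complex_of_real r * \<i>)) v) differentiable (at 0)"
proof -
  have "(\<lambda>y. d\<Psi> y v) differentiable (at (cusp_germ (complex_of_real 0 * \<i>)))"
    using diffeo_W germ_in_chart[OF V0] unfolding local_diffeo_def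
    by (intro cinf_on_directional_derivative_differentiable) auto
  moreover have "(\<lambda>r. cusp_germ (complex_of_real r * \<i>)) differentiable (at 0)"
    unfolding cusp_germ_imag_axis by (auto intro!: derivative_intros)
  ultimately show ?thesis using differentiable_chain_at[unfolded o_def] by blast
qed

lemma dF_imag_axis:
  assumes "complex_of_real r * \<i> \<in> V"
  shows "dF (\<phi> (complex_of_real r * \<i>)) (d\<phi> (complex_of_real r * \<i>) \<i>)
    = (2 * r) *\<^sub>R d\<Psi> (cusp_germ (complex_of_real r * \<i>)) (axis 2 1)
      + (3 * r^2) *\<^sub>R d\<Psi> (cusp_germ (complex_of_real r * \<i>)) (axis 3 1)"
  using dF_normal_form[OF assms, of \<i>] linear_d\<Psi>[OF germ_in_chart[OF assms]]
  unfolding cusp_germ_imag_axis by (simp add: linear_add linear_cmul)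

lemma dF_imag_axis_has_vector_derivative:
  "((\<lambda>r. dF (\<phi> (complex_of_real r * \<i>)) (d\<phi> (complex_of_real r * \<i>) \<i>))
     has_vector_derivative 2 *\<^sub>R d\<Psi> (cusp_germ 0) (axis 2 1)) (at 0)"
proof -
  define \<Psi>\<^sub>k where "\<Psi>\<^sub>k k r = d\<Psi> (cusp_germ (complex_of_real r * \<i>)) (axis k 1)" for k r
  obtain \<delta> where \<delta>: "\<delta> > 0" "ball 0 \<delta> \<subseteq> V"
    using diffeo_V V0 open_contains_ball unfolding local_diffeo_def by blast
  have G_eq: "dF (\<phi> (complex_of_real r * \<i>)) (d\<phi> (complex_of_real r * \<i>) \<i>)
      = (2 * r) *\<^sub>R \<Psi>\<^sub>k 2 r + (3 * r^2) *\<^sub>R \<Psi>\<^sub>k 3 r" if "r \<in> ball 0 \<delta>" for r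
  proof -
    have "complex_of_real r * \<i> \<in> ball 0 \<delta>" using that by (simp add: dist_norm norm_mult)
    then show ?thesis using dF_imag_axis \<delta>(2) unfolding \<Psi>\<^sub>k_def by blast
  qed
  obtain D\<^sub>2 D\<^sub>3 where "(\<Psi>\<^sub>k 2 has_vector_derivative D\<^sub>2) (at 0)" "(\<Psi>\<^sub>k 3 has_vector_derivative D\<^sub>3) (at 0)"
    using chart_axis_field_differentiable vector_derivative_works unfolding \<Psi>\<^sub>k_def by blast
  then have "((\<lambda>r. (2 * r) *\<^sub>R \<Psi>\<^sub>k 2 r + (3 * r^2) *\<^sub>R \<Psi>\<^sub>k 3 r) has_vector_derivative 2 *\<^sub>R \<Psi>\<^sub>k 2 0) (at 0)"
    by (auto intro!: derivative_eq_intros)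
  then have "((\<lambda>r. dF (\<phi> (complex_of_real r * \<i>)) (d\<phi> (complex_of_real r * \<i>) \<i>))
      has_vector_derivative 2 *\<^sub>R \<Psi>\<^sub>k 2 0) (at 0)"
    by (rule has_vector_derivative_transform_within_open[OF _ open_ball centre_in_ball[THEN iffD2, OF \<delta>(1)]])
      (simp add: G_eq)
  then show ?thesis by (simp add: \<Psi>\<^sub>k_def)
qed

(* The image of dF p is the line dPsi(e_1), while the normal form moves along e_2. *)
lemma dF_imag_axis_derivative_not_in_image:
  "2 *\<^sub>R d\<Psi> (cusp_germ 0) (axis 2 1) \<notin> range (dF p)"
proof
  assume "2 *\<^sub>R d\<Psi> (cusp_germ 0) (axis 2 1) \<in> range (dF p)"
  then obtain v where "2 *\<^sub>R d\<Psi> (cusp_germ 0) (axis 2 1) = d\<Psi> (cusp_germ 0) (vector [Re (d\<psi> p v), 0, 0, 0])"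
    using dF_at_p by auto
  then have "d\<Psi> (cusp_germ 0) (2 *\<^sub>R axis 2 1 - vector [Re (d\<psi> p v), 0, 0, 0]) = 0"
    using linear_d\<Psi>[OF germ_in_chart[OF V0]] by (simp add: linear_diff linear_cmul)
  then have "2 *\<^sub>R axis 2 1 - vector [Re (d\<psi> p v), 0, 0, 0] = (0::real^4)"
    using d\<Psi>_eq_0[OF germ_in_chart[OF V0]] by blast
  then show False by (simp add: vec4_eq_iff axis_def)
qed

lemma null_derivative_leaves_image:
  obtains \<sigma> \<tau> G where "\<sigma> 0 = p" "(\<sigma> has_vector_derivative \<tau> 0) (at 0)" "\<tau> differentiable (at 0)"
    "\<tau> 0 \<noteq> 0" "dF p (\<tau> 0) = 0" "((\<lambda>r. dF (\<sigma> r) (\<tau> r)) has_vector_derivative G) (at 0)"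
    "G \<notin> range (dF p)"
proof -
  define \<iota> where "\<iota> r = complex_of_real r * \<i>" for r
  define \<sigma> where "\<sigma> r = \<phi> (\<iota> r)" for r
  define \<tau> where "\<tau> r = d\<phi> (\<iota> r) \<i>" for r
  have \<iota>: "(\<iota> has_derivative (\<lambda>h. h *\<^sub>R \<i>)) (at r)" for r
    unfolding \<iota>_def by (auto intro!: derivative_eq_intros simp: scaleR_conv_of_real)
  have \<iota>0: "\<iota> 0 = 0" by (simp add: \<iota>_def)
  have \<sigma>0: "\<sigma> 0 = p" by (simp add: \<sigma>_def \<iota>0 \<phi>0)
  have "(\<phi> has_derivative d\<phi> (\<iota> 0)) (at (\<iota> 0))"
    unfolding \<iota>0 using diffeo_V V0 cinf_on_has_derivative unfolding local_diffeo_def by blast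
  from diff_chain_at[OF \<iota> this] have "(\<phi> \<circ> \<iota> has_derivative d\<phi> 0 \<circ> (\<lambda>h. h *\<^sub>R \<i>)) (at 0)"
    unfolding \<iota>0 .
  then have \<sigma>': "(\<sigma> has_vector_derivative \<tau> 0) (at 0)"
    unfolding has_vector_derivative_def \<sigma>_def \<tau>_def \<iota>0
    using linear_cmul[OF linear_d\<phi>[OF V0]] by (simp add: o_def)
  have "(\<lambda>y. d\<phi> y \<i>) differentiable (at (\<iota> 0))"
    using diffeo_V V0 \<iota>0 unfolding local_diffeo_def
    by (intro cinf_on_directional_derivative_differentiable) auto
  then have \<tau>': "\<tau> differentiable (at 0)"
    using differentiable_chain_at[OF differentiableI[OF \<iota>]] unfolding \<tau>_def o_def by blast
  have \<tau>0: "\<tau> 0 \<noteq> 0"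
  proof
    assume "\<tau> 0 = 0"
    moreover have "linear (d\<psi> p)"
      using diffeo_V p_in_image cinf_on_has_derivative has_derivative_linear
      unfolding local_diffeo_def by blast
    ultimately have "d\<psi> p (d\<phi> 0 \<i>) = 0" by (simp add: \<tau>_def \<iota>0 linear_0)
    then show False using local_diffeo_inverse_derivative[OF diffeo_V V0, of \<i>] by (simp add: \<phi>0)
  qed
  have "cusp_germ_deriv 0 \<i> = 0" by (simp add: cusp_germ_deriv_def vec4_eq_iff)
  then have null: "dF p (\<tau> 0) = 0"
    using dF_normal_form[OF V0, of \<i>] linear_0[OF linear_d\<Psi>[OF germ_in_chart[OF V0]]]
    by (simp add: \<tau>_def \<iota>0 \<phi>0)
  have "((\<lambda>r. dF (\<sigma> r) (\<tau> r)) has_vector_derivative 2 *\<^sub>R d\<Psi> (cusp_germ 0) (axis 2 1)) (at 0)"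
    using dF_imag_axis_has_vector_derivative unfolding \<sigma>_def \<tau>_def \<iota>_def .
  from that[OF \<sigma>0 \<sigma>' \<tau>' \<tau>0 null this dF_imag_axis_derivative_not_in_image] show ?thesis .
qed

end

lemma cusp_edge_cusp_chart:
  assumes "cusp_edge U F p" "\<And>z. z \<in> U \<Longrightarrow> (F has_derivative dF z) (at z)"
  obtains V \<phi> W \<Phi> where "cusp_chart U F dF p V \<phi> W \<Phi>"
proof -
  from assms(1) obtain V \<phi> W \<Phi> where "0 \<in> V" "local_diffeo V \<phi>" "\<phi> 0 = p" "\<phi> ` V \<subseteq> U"
    "local_diffeo W \<Phi>" "F ` \<phi> ` V \<subseteq> W" "\<forall>x\<in>V. \<Phi> (F (\<phi> x)) = vector [Re x, (Im x)^2, (Im x)^3, 0]"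
    unfolding cusp_edge_def by blast
  then have "cusp_chart U F dF p V \<phi> W \<Phi>"
    using assms(2) by unfold_locales (auto simp: cusp_germ_def)
  then show ?thesis by (rule that)
qed
section \<open>The dual flat fronts\<close>

definition front :: "(complex \<Rightarrow> complex^2^2) \<Rightarrow> real \<Rightarrow> complex \<Rightarrow> real^4" where
  "front A s z = conj_act (A z) (base_pt s)"

lemma hyp_front_eq_front: "hyp_front A = front A 1"
  by (rule ext) (simp add: hyp_front_def front_def conj_act_def herm_of_base_pt_one)

lemma ds_front_eq_front: "ds_front A = front A (-1)"
  by (rule ext) (simp add: ds_front_def front_def conj_act_def herm_of_base_pt_minus_one)

lemma Dmat_of_real_mult:
  "Dmat (a * (complex_of_real h * v)) (b * (complex_of_real h * v)) = h *\<^sub>R Dmat (a * v) (b * v)"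
  unfolding mat2_eq_iff by (simp add: Dmat_def) (simp add: scaleR_conv_of_real algebra_simps)

lemma frechet_derivative_apply_self:
  fixes \<eta> :: "complex \<Rightarrow> complex"
  assumes "\<eta> differentiable (at z)"
  shows "frechet_derivative \<eta> (at z) (\<eta> z)
    = Re (\<eta> z) *\<^sub>R frechet_derivative \<eta> (at z) 1 + Im (\<eta> z) *\<^sub>R frechet_derivative \<eta> (at z) \<i>"
proof -
  have l: "linear (frechet_derivative \<eta> (at z))"
    using assms frechet_derivative_works has_derivative_linear by blast
  have "\<eta> z = Re (\<eta> z) *\<^sub>R 1 + Im (\<eta> z) *\<^sub>R \<i>" by (simp add: complex_eq_iff)
  then show ?thesis by (metis linear_add[OF l] linear_cmul[OF l])
qed

lemma ex_small_interval_cong: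
  fixes \<epsilon> :: real
  assumes "\<exists>\<delta>\<^sub>0>0. \<delta>\<^sub>0 \<le> \<epsilon> \<and> (\<forall>t\<in>{-\<delta>\<^sub>0<..<\<delta>\<^sub>0}. P t \<longleftrightarrow> Q t)"
  shows "(\<exists>\<delta>>0. \<delta> \<le> \<epsilon> \<and> (\<forall>t\<in>{-\<delta><..<\<delta>}. P t)) \<longleftrightarrow> (\<exists>\<delta>>0. \<delta> \<le> \<epsilon> \<and> (\<forall>t\<in>{-\<delta><..<\<delta>}. Q t))"
proof -
  from assms obtain \<delta>\<^sub>0 where \<delta>\<^sub>0: "\<delta>\<^sub>0 > 0 \<and> \<delta>\<^sub>0 \<le> \<epsilon> \<and> (\<forall>t\<in>{-\<delta>\<^sub>0<..<\<delta>\<^sub>0}. P t \<longleftrightarrow> Q t)" ..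
  show ?thesis
  proof
    assume "\<exists>\<delta>>0. \<delta> \<le> \<epsilon> \<and> (\<forall>t\<in>{-\<delta><..<\<delta>}. P t)"
    then obtain \<delta> where "\<delta> > 0" "\<delta> \<le> \<epsilon>" "\<forall>t\<in>{-\<delta><..<\<delta>}. P t" by blast
    with \<delta>\<^sub>0 show "\<exists>\<delta>>0. \<delta> \<le> \<epsilon> \<and> (\<forall>t\<in>{-\<delta><..<\<delta>}. Q t)"
      by (intro exI[of _ "min \<delta> \<delta>\<^sub>0"]) (auto simp: min_def)
  next
    assume "\<exists>\<delta>>0. \<delta> \<le> \<epsilon> \<and> (\<forall>t\<in>{-\<delta><..<\<delta>}. Q t)"
    then obtain \<delta> where "\<delta> > 0" "\<delta> \<le> \<epsilon>" "\<forall>t\<in>{-\<delta><..<\<delta>}. Q t" by blast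
    with \<delta>\<^sub>0 show "\<exists>\<delta>>0. \<delta> \<le> \<epsilon> \<and> (\<forall>t\<in>{-\<delta><..<\<delta>}. P t)"
      by (intro exI[of _ "min \<delta> \<delta>\<^sub>0"]) (auto simp: min_def)
  qed
qed

locale flat_front_pair =
  fixes U :: "complex set" and \<alpha> \<beta> :: "complex \<Rightarrow> complex" and A :: "complex \<Rightarrow> complex^2^2"
  assumes U: "open U" and hol_\<alpha>: "\<alpha> holomorphic_on U" and hol_\<beta>: "\<beta> holomorphic_on U"
    and nz: "\<forall>z\<in>U. \<alpha> z \<noteq> 0 \<and> \<beta> z \<noteq> 0" and SL: "\<forall>z\<in>U. det (A z) = 1"
    and ode: "\<forall>z\<in>U. \<forall>i j. ((\<lambda>w. A w $ i $ j) has_field_derivative ((A z ** Dmat (\<alpha> z) (\<beta> z)) $ i $ j)) (at z)"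
begin

definition dfront :: "real \<Rightarrow> complex \<Rightarrow> complex \<Rightarrow> real^4" where
  "dfront s z v = conj_act (A z) (off_diag (dfront_coord s (\<alpha> z) (\<beta> z) v))"

lemma A_has_derivative: "z \<in> U \<Longrightarrow> (A has_derivative (\<lambda>h. A z ** Dmat (\<alpha> z * h) (\<beta> z * h))) (at z)"
  using has_derivative_of_matrix_ode ode by blast

lemma \<alpha>_has_derivative: "z \<in> U \<Longrightarrow> (\<alpha> has_field_derivative deriv \<alpha> z) (at z)"
  using holomorphic_derivI[OF hol_\<alpha> U] by blast

lemma \<beta>_has_derivative: "z \<in> U \<Longrightarrow> (\<beta> has_field_derivative deriv \<beta> z) (at z)"
  using holomorphic_derivI[OF hol_\<beta> U] by blast

lemma deriv_\<alpha>_differentiable: "z \<in> U \<Longrightarrow> deriv \<alpha> differentiable (at z)"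
  using holomorphic_on_imp_differentiable_at[OF holomorphic_deriv[OF hol_\<alpha> U] U]
  by (simp add: field_differentiable_imp_differentiable)

lemma deriv_\<beta>_differentiable: "z \<in> U \<Longrightarrow> deriv \<beta> differentiable (at z)"
  using holomorphic_on_imp_differentiable_at[OF holomorphic_deriv[OF hol_\<beta> U] U]
  by (simp add: field_differentiable_imp_differentiable)

lemma norm_det_A: "z \<in> U \<Longrightarrow> cmod (det (A z)) = 1"
  using SL by simp

lemma front_has_derivative: "z \<in> U \<Longrightarrow> (front A s has_derivative dfront s z) (at z)"
  using has_derivative_conj_act[OF A_has_derivative has_derivative_const, of z "base_pt s"]
  unfolding front_def[abs_def] dfront_def
  by (simp add: lie_act_base_pt dfront_coord_eq_one[of s "\<alpha> z"] mult.commute)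

lemma linear_dfront: "linear (dfront s z)"
proof (rule linearI)
  show "dfront s z (v + w) = dfront s z v + dfront s z w" for v w
    by (simp add: dfront_def dfront_coord_add off_diag_add conj_act_add)
  show "dfront s z (r *\<^sub>R v) = r *\<^sub>R dfront s z v" for r v
    unfolding scaleR_conv_of_real[of r v]
    by (simp add: dfront_def dfront_coord_of_real_mult off_diag_of_real_mult conj_act_scaleR)
qed

lemma frechet_derivative_front: "z \<in> U \<Longrightarrow> frechet_derivative (front A s) (at z) = dfront s z"
  using front_has_derivative frechet_derivative_at by metis

lemma dfront_eq_0_iff: "z \<in> U \<Longrightarrow> dfront s z v = 0 \<longleftrightarrow> dfront_coord s (\<alpha> z) (\<beta> z) v = 0"
  unfolding dfront_def using conj_act_eq_0_iff SL by simp

lemma sing_set_front_iff: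
  assumes s: "s^2 = 1"
  shows "z \<in> sing_set U (front A s) \<longleftrightarrow> z \<in> U \<and> cmod (\<alpha> z) = cmod (\<beta> z)"
proof -
  have "\<not> inj (dfront s z) \<longleftrightarrow> (\<exists>v. v \<noteq> 0 \<and> dfront s z v = 0)"
    using linear_injective_0[OF linear_dfront] by blast
  moreover have "z \<in> U \<Longrightarrow> (\<exists>v. v \<noteq> 0 \<and> dfront s z v = 0) \<longleftrightarrow> cmod (\<alpha> z) = cmod (\<beta> z)"
    using dfront_eq_0_iff norm_eq_if_dfront_coord_eq_0[OF s] dfront_coord_nonzero_root[OF s] nz
    by metis
  ultimately show ?thesis
    unfolding sing_set_def using frechet_derivative_front by auto
qed

lemma A_comp_has_vector_derivative:
  assumes "(\<gamma> has_vector_derivative v) (at t)" "\<gamma> t \<in> U"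
  shows "((\<lambda>r. A (\<gamma> r)) has_vector_derivative A (\<gamma> t) ** Dmat (\<alpha> (\<gamma> t) * v) (\<beta> (\<gamma> t) * v)) (at t)"
  using diff_chain_at[OF assms(1)[unfolded has_vector_derivative_def] A_has_derivative[OF assms(2)]]
  unfolding has_vector_derivative_def o_def
  by (simp add: scaleR_conv_of_real[of _ v] Dmat_of_real_mult matrix_scaleR_right)

lemma front_comp_has_vector_derivative:
  assumes "(\<gamma> has_vector_derivative v) (at t)" "\<gamma> t \<in> U"
  shows "((front A s \<circ> \<gamma>) has_vector_derivative dfront s (\<gamma> t) v) (at t)"
  using diff_chain_at[OF assms(1)[unfolded has_vector_derivative_def] front_has_derivative[OF assms(2)]]
  unfolding has_vector_derivative_def o_def linear_cmul[OF linear_dfront] .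

lemma dfront_coord_comp_has_vector_derivative:
  assumes \<sigma>: "(\<sigma> has_vector_derivative v) (at t)" "\<sigma> t \<in> U" and \<tau>: "(\<tau> has_vector_derivative \<tau>') (at t)"
  shows "((\<lambda>r. dfront_coord s (\<alpha> (\<sigma> r)) (\<beta> (\<sigma> r)) (\<tau> r)) has_vector_derivative
    dfront_coord s (deriv \<alpha> (\<sigma> t) * v) (deriv \<beta> (\<sigma> t) * v) (\<tau> t) + dfront_coord s (\<alpha> (\<sigma> t)) (\<beta> (\<sigma> t)) \<tau>') (at t)"
  using field_vector_diff_chain_at[OF \<sigma>(1) \<alpha>_has_derivative[OF \<sigma>(2)]]
    field_vector_diff_chain_at[OF \<sigma>(1) \<beta>_has_derivative[OF \<sigma>(2)]]
  unfolding dfront_coord_def o_def by (auto intro!: derivative_eq_intros \<tau> simp: algebra_simps)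

lemma conj_act_frame_has_vector_derivative:
  assumes \<gamma>: "(\<gamma> has_vector_derivative v) (at t)" "\<gamma> t \<in> U" and m: "(m has_vector_derivative m') (at t)"
    and J: "open J" "t \<in> J" and f: "\<And>r. r \<in> J \<Longrightarrow> f r = conj_act (A (\<gamma> r)) (off_diag (m r))"
  shows "(f has_vector_derivative
    conj_act (A (\<gamma> t)) (lie_act (Dmat (\<alpha> (\<gamma> t) * v) (\<beta> (\<gamma> t) * v)) (off_diag (m t)) + off_diag m')) (at t)"
  using conj_act_has_vector_derivative[OF A_comp_has_vector_derivative[OF \<gamma>] off_diag_has_vector_derivative[OF m]]
  by (rule has_vector_derivative_transform_within_open[OF _ J]) (simp add: f)

definition eta_eta_coord :: "real \<Rightarrow> (complex \<Rightarrow> complex) \<Rightarrow> complex \<Rightarrow> complex" where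
  "eta_eta_coord s \<eta> z = dfront_coord s (deriv \<alpha> z * \<eta> z) (deriv \<beta> z * \<eta> z) (\<eta> z)
     + dfront_coord s (\<alpha> z) (\<beta> z) (frechet_derivative \<eta> (at z) (\<eta> z))"

lemma eta_d_front: "z \<in> U \<Longrightarrow> eta_d \<eta> (front A s) z = dfront s z (\<eta> z)"
  unfolding eta_d_def using frechet_derivative_front by simp

lemma dfront_coord_field_has_derivative:
  assumes z: "z \<in> U" and \<eta>: "(\<eta> has_derivative d\<eta>) (at z)"
  shows "((\<lambda>z. dfront_coord s (\<alpha> z) (\<beta> z) (\<eta> z)) has_derivative
     (\<lambda>h. dfront_coord s (deriv \<alpha> z * h) (deriv \<beta> z * h) (\<eta> z) + dfront_coord s (\<alpha> z) (\<beta> z) (d\<eta> h))) (at z)"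
  using \<alpha>_has_derivative[OF z] \<beta>_has_derivative[OF z] unfolding has_field_derivative_def dfront_coord_def
  by (auto intro!: derivative_eq_intros \<eta> simp: algebra_simps)

lemma eta_d_eta_d_front:
  assumes z: "z \<in> U" and \<eta>: "\<eta> differentiable (at z)" and null: "dfront_coord s (\<alpha> z) (\<beta> z) (\<eta> z) = 0"
  shows "eta_d \<eta> (eta_d \<eta> (front A s)) z = conj_act (A z) (off_diag (eta_eta_coord s \<eta> z))"
proof -
  let ?W = "\<lambda>z. dfront_coord s (\<alpha> z) (\<beta> z) (\<eta> z)"
  have "((\<lambda>y. off_diag (?W y)) has_derivative
      (\<lambda>h. off_diag (dfront_coord s (deriv \<alpha> z * h) (deriv \<beta> z * h) (\<eta> z)
        + dfront_coord s (\<alpha> z) (\<beta> z) (frechet_derivative \<eta> (at z) h)))) (at z)"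
    using \<eta> frechet_derivative_works
    by (intro bounded_linear.has_derivative[OF bounded_linear_off_diag] dfront_coord_field_has_derivative z)
      blast
  from has_derivative_conj_act[OF A_has_derivative[OF z] this]
  have "((\<lambda>y. conj_act (A y) (off_diag (?W y))) has_derivative
      (\<lambda>h. conj_act (A z) (off_diag (dfront_coord s (deriv \<alpha> z * h) (deriv \<beta> z * h) (\<eta> z)
        + dfront_coord s (\<alpha> z) (\<beta> z) (frechet_derivative \<eta> (at z) h))))) (at z)"
    by (simp add: null)
  then have "(eta_d \<eta> (front A s) has_derivative
      (\<lambda>h. conj_act (A z) (off_diag (dfront_coord s (deriv \<alpha> z * h) (deriv \<beta> z * h) (\<eta> z)
        + dfront_coord s (\<alpha> z) (\<beta> z) (frechet_derivative \<eta> (at z) h))))) (at z)"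
    by (rule has_derivative_transform_within_open[OF _ U z]) (simp add: eta_d_front dfront_def)
  from fun_cong[OF frechet_derivative_at[OF this], of "\<eta> z"] show ?thesis
    unfolding eta_d_def[of \<eta> "eta_d \<eta> (front A s)"] eta_eta_coord_def by simp
qed

lemma eta_eta_coord_differentiable:
  assumes \<eta>: "cinf_on V \<eta>" "V \<subseteq> U" and z: "z \<in> V"
  shows "eta_eta_coord s \<eta> differentiable (at z)"
proof -
  have oV: "open V" using \<eta> unfolding cinf_on_def by blast
  have zU: "z \<in> U" using \<eta> z by blast
  have d\<eta>: "\<eta> differentiable (at y)" if "y \<in> V" for y
    using cinf_on_has_derivative[OF \<eta>(1) that] differentiableI by blast
  let ?R = "\<lambda>y. dfront_coord s (deriv \<alpha> y * \<eta> y) (deriv \<beta> y * \<eta> y) (\<eta> y) + dfront_coord s (\<alpha> y) (\<beta> y)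
      (Re (\<eta> y) *\<^sub>R frechet_derivative \<eta> (at y) 1 + Im (\<eta> y) *\<^sub>R frechet_derivative \<eta> (at y) \<i>)"
  have "\<alpha> differentiable (at z)" "\<beta> differentiable (at z)"
    using \<alpha>_has_derivative[OF zU] \<beta>_has_derivative[OF zU] field_differentiable_imp_differentiable
    unfolding field_differentiable_def by blast+
  moreover have "(\<lambda>y. Re (\<eta> y)) differentiable (at z)" "(\<lambda>y. Im (\<eta> y)) differentiable (at z)"
    by (rule differentiable_compose[OF bounded_linear_imp_differentiable d\<eta>[OF z]],
        simp add: bounded_linear_Re bounded_linear_Im)+
  ultimately have "?R differentiable (at z)"
    using d\<eta>[OF z] deriv_\<alpha>_differentiable[OF zU] deriv_\<beta>_differentiable[OF zU]
      cinf_on_directional_derivative_differentiable[OF \<eta>(1) z]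
    by (simp add: dfront_coord_def differentiable_cnj_iff)
  then obtain D where "(?R has_derivative D) (at z)" unfolding differentiable_def by blast
  then have "(eta_eta_coord s \<eta> has_derivative D) (at z)"
    by (rule has_derivative_transform_within_open[OF _ oV z])
      (simp add: eta_eta_coord_def frechet_derivative_apply_self[OF d\<eta>])
  then show ?thesis unfolding differentiable_def by blast
qed

(* The cuspidal edge condition, transported to frame coordinates: eta eta F is not tangent to the
   image line of dF.  Since dfront_coord has rank one on the singular set, differentiating dF along
   any null curve only sees the deriv alpha, deriv beta part of eta_eta_coord. *)
lemma eta_eta_coord_transversal:
  assumes s: "s^2 = 1" and edge: "cusp_edge U (front A s) p" and p: "p \<in> U" "cmod (\<alpha> p) = cmod (\<beta> p)"
    and \<eta>: "dfront_coord s (\<alpha> p) (\<beta> p) (\<eta> p) = 0" "\<eta> p \<noteq> 0"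
    and v: "dfront_coord s (\<alpha> p) (\<beta> p) v \<noteq> 0"
  shows "cross_c (dfront_coord s (\<alpha> p) (\<beta> p) v) (eta_eta_coord s \<eta> p) \<noteq> 0"
proof
  let ?w = "dfront_coord s (\<alpha> p) (\<beta> p) v"
  let ?X = "dfront_coord s (deriv \<alpha> p * \<eta> p) (deriv \<beta> p * \<eta> p) (\<eta> p)"
  assume c0: "cross_c ?w (eta_eta_coord s \<eta> p) = 0"
  obtain V \<phi> W \<Phi> where "cusp_chart U (front A s) (dfront s) p V \<phi> W \<Phi>"
    using cusp_edge_cusp_chart[OF edge front_has_derivative] by blast
  then interpret cusp_chart U "front A s" "dfront s" p V \<phi> W \<Phi> .
  obtain \<sigma> \<tau> G where \<sigma>: "\<sigma> 0 = p" "(\<sigma> has_vector_derivative \<tau> 0) (at 0)"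
    and \<tau>: "\<tau> differentiable (at 0)" "\<tau> 0 \<noteq> 0" "dfront s p (\<tau> 0) = 0"
    and G: "((\<lambda>r. dfront s (\<sigma> r) (\<tau> r)) has_vector_derivative G) (at 0)" "G \<notin> range (dfront s p)"
    by (rule null_derivative_leaves_image)
  obtain \<tau>' where \<tau>': "(\<tau> has_vector_derivative \<tau>') (at 0)"
    using \<tau>(1) vector_derivative_works by blast
  define m' where "m' = dfront_coord s (deriv \<alpha> p * \<tau> 0) (deriv \<beta> p * \<tau> 0) (\<tau> 0)
    + dfront_coord s (\<alpha> p) (\<beta> p) \<tau>'"
  have m0: "dfront_coord s (\<alpha> p) (\<beta> p) (\<tau> 0) = 0" using \<tau>(3) dfront_eq_0_iff[OF p(1)] by simp
  have "((\<lambda>r. dfront_coord s (\<alpha> (\<sigma> r)) (\<beta> (\<sigma> r)) (\<tau> r)) has_vector_derivative m') (at 0)"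
    using dfront_coord_comp_has_vector_derivative[OF \<sigma>(2) _ \<tau>'] p(1) unfolding \<sigma>(1) m'_def by simp
  from conj_act_frame_has_vector_derivative[OF \<sigma>(2) _ this open_UNIV UNIV_I, where f = "\<lambda>r. dfront s (\<sigma> r) (\<tau> r)"]
  have "((\<lambda>r. dfront s (\<sigma> r) (\<tau> r)) has_vector_derivative conj_act (A p) (off_diag m')) (at 0)"
    using p(1) m0 unfolding \<sigma>(1) by (simp add: dfront_def)
  then have G_eq: "G = conj_act (A p) (off_diag m')" using G(1) vector_derivative_unique_at by blast
  have rank_one: "cross_c ?w (dfront_coord s (\<alpha> p) (\<beta> p) x) = 0" for x
    using s p(2) by (simp add: cross_c_dfront_coord)
  obtain \<kappa> where "\<tau> 0 = complex_of_real \<kappa> * \<eta> p"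
    using dfront_coord_kernel_dim_one[OF \<eta>(1) m0 v \<eta>(2)] by blast
  then have "m' = complex_of_real (\<kappa>^2) * ?X + dfront_coord s (\<alpha> p) (\<beta> p) \<tau>'"
    unfolding m'_def by (simp only: dfront_coord_rescale)
  moreover have "cross_c ?w ?X = 0"
    using c0 unfolding eta_eta_coord_def by (simp add: cross_c_add_right rank_one)
  ultimately have "cross_c ?w m' = 0"
    by (simp add: cross_c_add_right cross_c_of_real_mult_right rank_one del: of_real_power)
  then have "m' = complex_of_real ((?w \<bullet> m') / (?w \<bullet> ?w)) * ?w"
    using cross_c_eq_0_imp_parallel v by blast
  then have "G = dfront s p (((?w \<bullet> m') / (?w \<bullet> ?w)) *\<^sub>R v)"
    unfolding G_eq dfront_def by (metis linear_cmul[OF linear_dfront] dfront_def off_diag_of_real_mult conj_act_scaleR)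
  then show False using G(2) by blast
qed

definition tangent_coord :: "real \<Rightarrow> (real \<Rightarrow> complex) \<Rightarrow> real \<Rightarrow> complex" where
  "tangent_coord s \<gamma> t = dfront_coord s (\<alpha> (\<gamma> t)) (\<beta> (\<gamma> t)) (vector_derivative \<gamma> (at t))"

lemma vector_derivative_front_comp:
  assumes "\<gamma> differentiable (at t)" "\<gamma> t \<in> U"
  shows "vector_derivative (front A s \<circ> \<gamma>) (at t) = conj_act (A (\<gamma> t)) (off_diag (tangent_coord s \<gamma> t))"
  using vector_derivative_at[OF front_comp_has_vector_derivative[OF vector_derivative_works[THEN iffD1, OF assms(1)] assms(2)]]
  unfolding dfront_def tangent_coord_def .

lemma line_of_curvature_at_iff:
  assumes "\<gamma> differentiable (at t)" "\<gamma> t \<in> U" "tangent_coord s \<gamma> t \<noteq> 0"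
  shows "line_of_curvature (front A s) (front A (-s)) \<gamma> {t}
    \<longleftrightarrow> cross_c (tangent_coord s \<gamma> t) (tangent_coord (-s) \<gamma> t) = 0"
proof -
  have "a *\<^sub>R conj_act (A (\<gamma> t)) (off_diag w) + b *\<^sub>R conj_act (A (\<gamma> t)) (off_diag u) = 0
      \<longleftrightarrow> complex_of_real a * w + complex_of_real b * u = 0" for a b w u
    using conj_act_eq_0_iff[of "A (\<gamma> t)"] SL assms(2)
    by (simp flip: conj_act_scaleR conj_act_add off_diag_of_real_mult off_diag_add)
  moreover have "vector_derivative (front A s \<circ> \<gamma>) (at t) = conj_act (A (\<gamma> t)) (off_diag (tangent_coord s \<gamma> t))"
    "vector_derivative (front A (-s) \<circ> \<gamma>) (at t) = conj_act (A (\<gamma> t)) (off_diag (tangent_coord (-s) \<gamma> t))"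
    by (rule vector_derivative_front_comp[OF assms(1,2)])+
  ultimately show ?thesis
    unfolding line_of_curvature_def using real_dependent_iff_cross_c[OF assms(3)] by simp
qed

lemma cinf_on_vector_derivative:
  fixes \<gamma> :: "real \<Rightarrow> complex"
  assumes "cinf_on I \<gamma>" "t \<in> I"
  shows "(\<gamma> has_vector_derivative vector_derivative \<gamma> (at t)) (at t)"
    and "(\<lambda>r. vector_derivative \<gamma> (at r)) differentiable (at t)"
proof -
  have hv: "(\<gamma> has_vector_derivative vector_derivative \<gamma> (at r)) (at r)" if "r \<in> I" for r
    using cinf_on_has_derivative[OF assms(1) that] differentiableI vector_derivative_works by blast
  then show "(\<gamma> has_vector_derivative vector_derivative \<gamma> (at t)) (at t)" using assms(2) .
  have eq: "frechet_derivative \<gamma> (at r) 1 = vector_derivative \<gamma> (at r)" if "r \<in> I" for r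
    using frechet_derivative_at[OF hv[OF that, unfolded has_vector_derivative_def]] by (metis scaleR_one)
  obtain D where "((\<lambda>r. frechet_derivative \<gamma> (at r) 1) has_derivative D) (at t)"
    using cinf_on_directional_derivative_differentiable[OF assms] unfolding differentiable_def by blast
  then have "((\<lambda>r. vector_derivative \<gamma> (at r)) has_derivative D) (at t)"
    using assms unfolding cinf_on_def by (elim has_derivative_transform_within_open) (auto simp: eq)
  then show "(\<lambda>r. vector_derivative \<gamma> (at r)) differentiable (at t)"
    unfolding differentiable_def by blast
qed

lemma tangent_coord_differentiable:
  assumes "cinf_on I \<gamma>" "t \<in> I" "\<gamma> t \<in> U"
  shows "tangent_coord s \<gamma> differentiable (at t)"
proof -
  have "\<gamma> differentiable (at t)"
    using cinf_on_vector_derivative(1)[OF assms(1,2)] differentiableI_vector by blast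
  then have "(\<lambda>r. \<alpha> (\<gamma> r)) differentiable (at t)" "(\<lambda>r. \<beta> (\<gamma> r)) differentiable (at t)"
    using \<alpha>_has_derivative[OF assms(3)] \<beta>_has_derivative[OF assms(3)]
    unfolding has_field_derivative_def by (auto intro: differentiable_compose differentiableI)
  then show ?thesis
    using cinf_on_vector_derivative(2)[OF assms(1,2)]
    unfolding tangent_coord_def dfront_coord_def
    by (intro differentiable_add differentiable_mult differentiable_const
        differentiable_cnj_iff[THEN iffD2])
qed

lemma cusp_torsion_eq_frame_torsion:
  assumes \<gamma>: "cinf_on I \<gamma>" "\<gamma> ` I \<subseteq> U" and J: "open J" "t \<in> J" "J \<subseteq> I"
    and \<eta>: "cinf_on V \<eta>" "V \<subseteq> U" "\<gamma> ` J \<subseteq> V"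
    and null: "\<And>r. r \<in> J \<Longrightarrow> dfront_coord s (\<alpha> (\<gamma> r)) (\<beta> (\<gamma> r)) (\<eta> (\<gamma> r)) = 0"
  defines "D \<equiv> Dmat (\<alpha> (\<gamma> t) * vector_derivative \<gamma> (at t)) (\<beta> (\<gamma> t) * vector_derivative \<gamma> (at t))"
  obtains c' w' where "cusp_torsion (front A s) \<gamma> \<eta> t = frame_torsion (A (\<gamma> t)) s
    (tangent_coord s \<gamma> t) (eta_eta_coord s \<eta> (\<gamma> t))
    (lie_act D (off_diag (eta_eta_coord s \<eta> (\<gamma> t))) + off_diag c') (lie_act D (off_diag (tangent_coord s \<gamma> t)) + off_diag w')"
proof -
  define w where "w = tangent_coord s \<gamma>"
  define c where "c r = eta_eta_coord s \<eta> (\<gamma> r)" for r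
  have oI: "open I" and tI: "t \<in> I" and \<gamma>t: "\<gamma> t \<in> U" using \<gamma> J unfolding cinf_on_def by auto
  have \<gamma>': "(\<gamma> has_vector_derivative vector_derivative \<gamma> (at r)) (at r)" if "r \<in> I" for r
    using cinf_on_vector_derivative(1)[OF \<gamma>(1) that] .
  have \<gamma>V: "\<gamma> r \<in> V" if "r \<in> J" for r using \<eta>(3) that by blast
  have X: "eta_d \<eta> (eta_d \<eta> (front A s)) (\<gamma> r) = conj_act (A (\<gamma> r)) (off_diag (c r))" if "r \<in> J" for r
    unfolding c_def
    using eta_d_eta_d_front[OF _ differentiableI[OF cinf_on_has_derivative[OF \<eta>(1) \<gamma>V[OF that]]] null[OF that]]
      \<eta>(2) \<gamma>V[OF that] by blast
  have g1: "vector_derivative (front A s \<circ> \<gamma>) (at r) = conj_act (A (\<gamma> r)) (off_diag (w r))" if "r \<in> I" for r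
    unfolding w_def using vector_derivative_front_comp[OF differentiableI_vector[OF \<gamma>'[OF that]]]
      \<gamma>(2) that by blast
  have "c differentiable (at t)"
    unfolding c_def using differentiable_compose[OF eta_eta_coord_differentiable[OF \<eta>(1,2) \<gamma>V[OF J(2)]]
      differentiableI_vector[OF \<gamma>'[OF tI]]] .
  then obtain c' where "(c has_vector_derivative c') (at t)" using vector_derivative_works by blast
  from conj_act_frame_has_vector_derivative[OF \<gamma>'[OF tI] \<gamma>t this J(1,2) X]
  have X': "vector_derivative (\<lambda>r. eta_d \<eta> (eta_d \<eta> (front A s)) (\<gamma> r)) (at t)
      = conj_act (A (\<gamma> t)) (lie_act D (off_diag (c t)) + off_diag c')"
    unfolding D_def by (rule vector_derivative_at)
  obtain w' where "(w has_vector_derivative w') (at t)"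
    using tangent_coord_differentiable[OF \<gamma>(1) tI \<gamma>t] vector_derivative_works unfolding w_def by blast
  from conj_act_frame_has_vector_derivative[OF \<gamma>'[OF tI] \<gamma>t this oI tI g1]
  have G': "vector_derivative (\<lambda>r. vector_derivative (front A s \<circ> \<gamma>) (at r)) (at t)
      = conj_act (A (\<gamma> t)) (lie_act D (off_diag (w t)) + off_diag w')"
    unfolding D_def by (rule vector_derivative_at)
  have "cusp_torsion (front A s) \<gamma> \<eta> t = frame_torsion (A (\<gamma> t)) s (w t) (c t)
      (lie_act D (off_diag (c t)) + off_diag c') (lie_act D (off_diag (w t)) + off_diag w')"
    unfolding cusp_torsion_def frame_torsion_def Let_def X' G' g1[OF tI] X[OF J(2)] by (simp add: front_def)
  then show ?thesis using that unfolding w_def c_def by blast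
qed

lemma cusp_torsion_eq_0_iff_at:
  assumes \<gamma>: "cinf_on I \<gamma>" "\<gamma> ` I \<subseteq> U" and J: "open J" "t \<in> J" "J \<subseteq> I"
    and \<eta>: "cinf_on V \<eta>" "V \<subseteq> U" "\<gamma> ` J \<subseteq> V"
    and null: "\<And>r. r \<in> J \<Longrightarrow> dfront_coord s (\<alpha> (\<gamma> r)) (\<beta> (\<gamma> r)) (\<eta> (\<gamma> r)) = 0"
    and w: "tangent_coord s \<gamma> t \<noteq> 0" and wc: "cross_c (tangent_coord s \<gamma> t) (eta_eta_coord s \<eta> (\<gamma> t)) \<noteq> 0"
  shows "cusp_torsion (front A s) \<gamma> \<eta> t = 0
    \<longleftrightarrow> cross_c (tangent_coord s \<gamma> t) (tangent_coord (-s) \<gamma> t) = 0"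
proof -
  define v where "v = vector_derivative \<gamma> (at t)"
  define D where "D = Dmat (\<alpha> (\<gamma> t) * v) (\<beta> (\<gamma> t) * v)"
  obtain c' w' where T: "cusp_torsion (front A s) \<gamma> \<eta> t = frame_torsion (A (\<gamma> t)) s
    (tangent_coord s \<gamma> t) (eta_eta_coord s \<eta> (\<gamma> t))
    (lie_act D (off_diag (eta_eta_coord s \<eta> (\<gamma> t))) + off_diag c') (lie_act D (off_diag (tangent_coord s \<gamma> t)) + off_diag w')"
    using cusp_torsion_eq_frame_torsion[OF \<gamma> J \<eta> null] unfolding D_def v_def by blast
  have u: "dfront_coord (-s) (\<alpha> (\<gamma> t) * v) (\<beta> (\<gamma> t) * v) 1 = tangent_coord (-s) \<gamma> t"
    unfolding tangent_coord_def v_def by (rule dfront_coord_eq_one[symmetric])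
  show ?thesis
    unfolding T
  proof (rule frame_torsion_eq_0_iff[OF _ w wc])
    show "cmod (det (A (\<gamma> t))) = 1" using norm_det_A \<gamma>(2) J by blast
    show "normal_coord s (lie_act D (off_diag (eta_eta_coord s \<eta> (\<gamma> t))) + off_diag c')
        = - (tangent_coord (-s) \<gamma> t \<bullet> eta_eta_coord s \<eta> (\<gamma> t))"
      "normal_coord s (lie_act D (off_diag (tangent_coord s \<gamma> t)) + off_diag w')
        = - (tangent_coord (-s) \<gamma> t \<bullet> tangent_coord s \<gamma> t)"
      unfolding D_def normal_coord_lie_act_off_diag u by simp_all
  qed
qed
lemma null_vf_dfront_coord:
  assumes "null_vf U (front A s) \<eta> V" "q \<in> V" "q \<in> sing_set U (front A s)"
  shows "dfront_coord s (\<alpha> q) (\<beta> q) (\<eta> q) = 0" "\<eta> q \<noteq> 0"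
proof -
  have "q \<in> U" "\<eta> q \<noteq> 0" "frechet_derivative (front A s) (at q) (\<eta> q) = 0"
    using assms unfolding null_vf_def by auto
  then show "dfront_coord s (\<alpha> q) (\<beta> q) (\<eta> q) = 0" "\<eta> q \<noteq> 0"
    using frechet_derivative_front dfront_eq_0_iff by simp_all
qed

lemma singular_curve_frame_nondegenerate:
  assumes s: "s^2 = 1" and \<epsilon>: "\<epsilon> > 0" and \<gamma>: "cinf_on {-\<epsilon><..<\<epsilon>} \<gamma>" "\<gamma> 0 = p"
    and sing: "\<And>t. t \<in> {-\<epsilon><..<\<epsilon>} \<Longrightarrow> vector_derivative \<gamma> (at t) \<noteq> 0 \<and> \<gamma> t \<in> sing_set U (front A s)"
    and edge: "cusp_edge U (front A s) p" and \<eta>: "null_vf U (front A s) \<eta> V" "p \<in> V"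
  shows "tangent_coord s \<gamma> 0 \<noteq> 0" "cross_c (tangent_coord s \<gamma> 0) (eta_eta_coord s \<eta> (\<gamma> 0)) \<noteq> 0"
proof -
  have I0: "0 \<in> {-\<epsilon><..<\<epsilon>}" using \<epsilon> by simp
  have p_sing: "p \<in> sing_set U (front A s)" and pU: "p \<in> U"
    using sing[OF I0] \<gamma>(2) unfolding sing_set_def by auto
  obtain V' \<phi> W \<Phi> where "cusp_chart U (front A s) (dfront s) p V' \<phi> W \<Phi>"
    using cusp_edge_cusp_chart[OF edge front_has_derivative] by blast
  from cusp_chart.dF_singular_curve_velocity_nonzero[OF this \<epsilon> \<gamma>(2) cinf_on_vector_derivative(1)[OF \<gamma>(1) I0]]
  have "dfront s p (vector_derivative \<gamma> (at 0)) \<noteq> 0"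
    using sing I0 by blast
  then show w0: "tangent_coord s \<gamma> 0 \<noteq> 0"
    using dfront_eq_0_iff[OF pU] \<gamma>(2) unfolding tangent_coord_def by simp
  show "cross_c (tangent_coord s \<gamma> 0) (eta_eta_coord s \<eta> (\<gamma> 0)) \<noteq> 0"
    using eta_eta_coord_transversal[OF s edge pU] null_vf_dfront_coord[OF \<eta>(1,2) p_sing]
      sing_set_front_iff[OF s] p_sing w0 \<gamma>(2)
    unfolding tangent_coord_def by simp
qed

lemma singular_curve_frame_nondegenerate_near_0:
  assumes "s^2 = 1" and \<epsilon>: "\<epsilon> > 0" and \<gamma>: "cinf_on {-\<epsilon><..<\<epsilon>} \<gamma>" "\<gamma> 0 = p"
    and sing: "\<And>t. t \<in> {-\<epsilon><..<\<epsilon>} \<Longrightarrow> vector_derivative \<gamma> (at t) \<noteq> 0 \<and> \<gamma> t \<in> sing_set U (front A s)"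
    and "cusp_edge U (front A s) p" and \<eta>: "null_vf U (front A s) \<eta> V" "p \<in> V"
  obtains \<delta> where "\<delta> > 0" "\<delta> \<le> \<epsilon>" "\<And>t. t \<in> {-\<delta><..<\<delta>} \<Longrightarrow> \<gamma> t \<in> V \<and> tangent_coord s \<gamma> t \<noteq> 0
     \<and> cross_c (tangent_coord s \<gamma> t) (eta_eta_coord s \<eta> (\<gamma> t)) \<noteq> 0"
proof -
  define w where "w = tangent_coord s \<gamma>"
  define c where "c t = eta_eta_coord s \<eta> (\<gamma> t)" for t
  have I0: "0 \<in> {-\<epsilon><..<\<epsilon>}" using \<epsilon> by auto
  have V: "open V" "V \<subseteq> U" "cinf_on V \<eta>" using \<eta>(1) unfolding null_vf_def by auto
  note nondeg = singular_curve_frame_nondegenerate[OF assms, folded w_def]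
  have \<gamma>_cont: "continuous (at 0) \<gamma>"
    using has_vector_derivative_continuous[OF cinf_on_vector_derivative(1)[OF \<gamma>(1) I0]] .
  have w_cont: "continuous (at 0) w"
    unfolding w_def using I0 sing[OF I0] unfolding sing_set_def
    by (intro differentiable_imp_continuous_within tangent_coord_differentiable[OF \<gamma>(1)]) auto
  have "continuous (at (\<gamma> 0)) (eta_eta_coord s \<eta>)"
    unfolding \<gamma>(2) by (rule differentiable_imp_continuous_within[OF eta_eta_coord_differentiable[OF V(3,2) \<eta>(2)]])
  from continuous_at_compose[OF \<gamma>_cont this] have "continuous (at 0) c"
    unfolding c_def o_def .
  with w_cont have "continuous (at 0) (\<lambda>t. cross_c (w t) (c t))"
    unfolding cross_c_def by (intro continuous_intros) auto
  from continuous_at_avoid[OF this nondeg(2)[folded c_def]]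
  obtain e1 where e1: "e1 > 0" "\<And>t. dist 0 t < e1 \<Longrightarrow> cross_c (w t) (c t) \<noteq> 0" by blast
  from continuous_at_avoid[OF w_cont nondeg(1)]
  obtain e2 where e2: "e2 > 0" "\<And>t. dist 0 t < e2 \<Longrightarrow> w t \<noteq> 0" by blast
  obtain e3 where e3: "e3 > 0" "\<And>t. dist t 0 < e3 \<Longrightarrow> \<gamma> t \<in> V"
    using \<gamma>_cont V(1) \<eta>(2) \<gamma>(2) unfolding continuous_at_eps_delta open_dist by (metis dist_commute)
  show ?thesis
  proof (rule that[of "min (min e1 e2) (min e3 \<epsilon>)"])
    fix t assume "t \<in> {- min (min e1 e2) (min e3 \<epsilon>)<..<min (min e1 e2) (min e3 \<epsilon>)}"
    then have "dist 0 t < e1" "dist 0 t < e2" "dist t 0 < e3" by (auto simp: dist_real_def)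
    then show "\<gamma> t \<in> V \<and> tangent_coord s \<gamma> t \<noteq> 0 \<and> cross_c (tangent_coord s \<gamma> t) (eta_eta_coord s \<eta> (\<gamma> t)) \<noteq> 0"
      using e1(2) e2(2) e3(2) unfolding w_def c_def by blast
  qed (use e1 e2 e3 \<epsilon> in auto)
qed

lemma line_of_curvature_iff_cusp_torsion_near_0:
  assumes "s^2 = 1" and "\<epsilon> > 0" and \<gamma>: "cinf_on {-\<epsilon><..<\<epsilon>} \<gamma>" "\<gamma> 0 = p"
    and sing: "\<And>t. t \<in> {-\<epsilon><..<\<epsilon>} \<Longrightarrow> vector_derivative \<gamma> (at t) \<noteq> 0 \<and> \<gamma> t \<in> sing_set U (front A s)"
    and "cusp_edge U (front A s) p" and \<eta>: "null_vf U (front A s) \<eta> V" "p \<in> V"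
  shows "\<exists>\<delta>>0. \<delta> \<le> \<epsilon> \<and> (\<forall>t\<in>{-\<delta><..<\<delta>}.
     line_of_curvature (front A s) (front A (-s)) \<gamma> {t} \<longleftrightarrow> cusp_torsion (front A s) \<gamma> \<eta> t = 0)"
proof -
  obtain \<delta> where \<delta>: "\<delta> > 0" "\<delta> \<le> \<epsilon>" and nondeg: "\<And>t. t \<in> {-\<delta><..<\<delta>} \<Longrightarrow> \<gamma> t \<in> V
      \<and> tangent_coord s \<gamma> t \<noteq> 0 \<and> cross_c (tangent_coord s \<gamma> t) (eta_eta_coord s \<eta> (\<gamma> t)) \<noteq> 0"
    using singular_curve_frame_nondegenerate_near_0[OF assms] by blast
  define I where "I = {-\<epsilon><..<\<epsilon>}"
  define J where "J = {-\<delta><..<\<delta>}"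
  have J: "open J" "J \<subseteq> I" "\<gamma> ` J \<subseteq> V" using \<delta> nondeg unfolding J_def I_def by auto
  have \<gamma>I: "\<gamma> ` I \<subseteq> U" using sing unfolding I_def sing_set_def by auto
  have V: "V \<subseteq> U" "cinf_on V \<eta>" using \<eta>(1) unfolding null_vf_def by auto
  have null: "dfront_coord s (\<alpha> (\<gamma> r)) (\<beta> (\<gamma> r)) (\<eta> (\<gamma> r)) = 0" if "r \<in> J" for r
    using null_vf_dfront_coord(1)[OF \<eta>(1)] J(2,3) sing that unfolding I_def by blast
  show ?thesis
  proof (intro exI[of _ \<delta>] conjI ballI \<delta>)
    fix t assume t: "t \<in> {-\<delta><..<\<delta>}"
    then have tJ: "t \<in> J" and tI: "t \<in> I" using J(2) unfolding J_def by auto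
    have "line_of_curvature (front A s) (front A (-s)) \<gamma> {t}
        \<longleftrightarrow> cross_c (tangent_coord s \<gamma> t) (tangent_coord (-s) \<gamma> t) = 0"
      using line_of_curvature_at_iff cinf_on_vector_derivative(1)[OF \<gamma>(1)[folded I_def] tI] \<gamma>I tI nondeg[OF t]
      by (meson differentiableI_vector image_subset_iff)
    also have "\<dots> \<longleftrightarrow> cusp_torsion (front A s) \<gamma> \<eta> t = 0"
      using cusp_torsion_eq_0_iff_at[OF \<gamma>(1)[folded I_def] \<gamma>I J(1) tJ J(2) V(2) V(1) J(3) null] nondeg[OF t]
      by blast
    finally show "line_of_curvature (front A s) (front A (-s)) \<gamma> {t} \<longleftrightarrow> cusp_torsion (front A s) \<gamma> \<eta> t = 0" .
  qed
qed

lemma line_of_curvature_iff_cusp_torsion: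
  assumes "s^2 = 1" "\<epsilon> > 0" "cinf_on {-\<epsilon><..<\<epsilon>} \<gamma>" "\<gamma> 0 = p"
    and "\<And>t. t \<in> {-\<epsilon><..<\<epsilon>} \<Longrightarrow> vector_derivative \<gamma> (at t) \<noteq> 0 \<and> \<gamma> t \<in> sing_set U (front A s)"
    and "cusp_edge U (front A s) p" "null_vf U (front A s) \<eta> V" "p \<in> V"
  shows "(\<exists>\<delta>>0. \<delta> \<le> \<epsilon> \<and> line_of_curvature (front A s) (front A (-s)) \<gamma> {-\<delta><..<\<delta>})
    \<longleftrightarrow> (\<exists>\<delta>>0. \<delta> \<le> \<epsilon> \<and> (\<forall>t\<in>{-\<delta><..<\<delta>}. cusp_torsion (front A s) \<gamma> \<eta> t = 0))"
proof -
  have pointwise: "(\<forall>t\<in>S. line_of_curvature K N \<gamma> {t}) \<longleftrightarrow> line_of_curvature K N \<gamma> S" for K N S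
    unfolding line_of_curvature_def by auto
  from ex_small_interval_cong[OF line_of_curvature_iff_cusp_torsion_near_0[OF assms]] show ?thesis
    unfolding pointwise .
qed

end

theorem proposition4p1:
  fixes U :: "complex set" and \<alpha> \<beta> :: "complex \<Rightarrow> complex"
    and A :: "complex \<Rightarrow> complex^2^2" and p :: complex
    and \<gamma> :: "real \<Rightarrow> complex" and \<epsilon> :: real
    and \<eta> \<zeta> :: "complex \<Rightarrow> complex" and V W :: "complex set"
  assumes U: "open U" "connected U"
    and hol: "\<alpha> holomorphic_on U" "\<beta> holomorphic_on U"
    and nz: "\<forall>z\<in>U. \<alpha> z \<noteq> 0 \<and> \<beta> z \<noteq> 0"
    and SL: "\<forall>z\<in>U. det (A z) = 1"
    and ode: "\<forall>z\<in>U. \<forall>i j. ((\<lambda>w. A w $ i $ j) has_field_derivative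
                             ((A z ** Dmat (\<alpha> z) (\<beta> z)) $ i $ j)) (at z)"
    and curve: "sing_curve U (hyp_front A) \<gamma> \<epsilon> p"
  shows "(cusp_edge U (hyp_front A) p \<and> null_vf U (hyp_front A) \<eta> V \<and> p \<in> V \<longrightarrow>
            ((\<exists>\<delta>>0. \<delta> \<le> \<epsilon> \<and> line_of_curvature (hyp_front A) (ds_front A) \<gamma> {-\<delta><..<\<delta>})
             \<longleftrightarrow> (\<exists>\<delta>>0. \<delta> \<le> \<epsilon> \<and> (\<forall>t\<in>{-\<delta><..<\<delta>}. cusp_torsion (hyp_front A) \<gamma> \<eta> t = 0))))
       \<and> (cusp_edge U (ds_front A) p \<and> null_vf U (ds_front A) \<zeta> W \<and> p \<in> W \<longrightarrow>
            ((\<exists>\<delta>>0. \<delta> \<le> \<epsilon> \<and> line_of_curvature (ds_front A) (hyp_front A) \<gamma> {-\<delta><..<\<delta>})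
             \<longleftrightarrow> (\<exists>\<delta>>0. \<delta> \<le> \<epsilon> \<and> (\<forall>t\<in>{-\<delta><..<\<delta>}. cusp_torsion (ds_front A) \<gamma> \<zeta> t = 0))))"
proof -
  interpret flat_front_pair U \<alpha> \<beta> A
    using U hol nz SL ode by unfold_locales auto
  have s: "(1::real)^2 = 1" "(-1::real)^2 = 1" by simp_all
  have sing_eq: "sing_set U (front A (-1)) = sing_set U (front A 1)"
    using sing_set_front_iff[OF s(1)] sing_set_front_iff[OF s(2)] by auto
  have \<gamma>: "\<epsilon> > 0" "cinf_on {-\<epsilon><..<\<epsilon>} \<gamma>" "\<gamma> 0 = p"
    and sing: "\<And>t. t \<in> {-\<epsilon><..<\<epsilon>} \<Longrightarrow> vector_derivative \<gamma> (at t) \<noteq> 0 \<and> \<gamma> t \<in> sing_set U (front A 1)"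
    using curve unfolding sing_curve_def hyp_front_eq_front by auto
  show ?thesis
    using line_of_curvature_iff_cusp_torsion[OF s(1) \<gamma> sing]
      line_of_curvature_iff_cusp_torsion[OF s(2) \<gamma> sing[folded sing_eq], unfolded minus_minus]
    unfolding hyp_front_eq_front ds_front_eq_front by blast
qed

end
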